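(* Let $G$ be a connected graph. For any $s,t,p,q\in V(G)$, $$t(G)\,t(G_{pq,st})=t(G_{st})\,t(G_{pq})-\frac14\big[t(G_{ps})-t(G_{qs})-t(G_{pt})+t(G_{qt})\big]^2.$$ In particular, for any $s,p,q\in V(G)$, $$t(G)\,t(G_{pqs})=t(G_{ps})\,t(G_{pq})-\frac14\big[t(G_{ps})-t(G_{qs})+t(G_{pq})\big]^2.$$
   Context: Graphs are finite and may have multiple edges and loops; $t(H)$ is the number of spanning trees of $H$; a graph with one vertex has $t=1$. For vertices $x,y$ of a graph $H$, $H_{xy}$ is obtained by identifying $x$ and $y$, with the convention $t(H_{xx}):=0$. $G_{pq,st}$ is the graph obtained from $G_{pq}$ by identifying $s$ and $t$ (so $G_{pq,st}=(G_{pq})_{st}$), and $G_{pqs}$ is obtained from $G$ by identifying $p$, $q$ and $s$ into one vertex (i.e. $G_{pqs}=G_{pq,ps}$). *)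

theory Defs
  imports Main Complex_Main
begin

text \<open>A finite multigraph (loops and parallel edges allowed) is a triple
  (V, E, ends): vertex set V, edge set E, and for each edge its pair of endpoints.\<close>
type_synonym ('v,'e) mgraph = "'v set \<times> 'e set \<times> ('e \<Rightarrow> 'v \<times> 'v)"

definition verts :: "('v,'e) mgraph \<Rightarrow> 'v set" where "verts G = fst G"
definition edges :: "('v,'e) mgraph \<Rightarrow> 'e set" where "edges G = fst (snd G)"
definition ends :: "('v,'e) mgraph \<Rightarrow> 'e \<Rightarrow> 'v \<times> 'v" where "ends G = snd (snd G)"

definition wf_mgraph :: "('v,'e) mgraph \<Rightarrow> bool" where
  "wf_mgraph G \<longleftrightarrow> finite (verts G) \<and> finite (edges G) \<and>
     (\<forall>e\<in>edges G. fst (ends G e) \<in> verts G \<and> snd (ends G e) \<in> verts G)"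

definition joins :: "('v,'e) mgraph \<Rightarrow> 'e \<Rightarrow> 'v \<Rightarrow> 'v \<Rightarrow> bool" where
  "joins G e x y \<longleftrightarrow> ends G e = (x, y) \<or> ends G e = (y, x)"

definition connected_by :: "('v,'e) mgraph \<Rightarrow> 'e set \<Rightarrow> bool" where
  "connected_by G T \<longleftrightarrow>
     (\<forall>x\<in>verts G. \<forall>y\<in>verts G. (\<lambda>a b. \<exists>e\<in>T. joins G e a b)\<^sup>*\<^sup>* x y)"

definition connected_mgraph :: "('v,'e) mgraph \<Rightarrow> bool" where
  "connected_mgraph G \<longleftrightarrow> verts G \<noteq> {} \<and> connected_by G (edges G)"

text \<open>A cycle using edges of T: distinct edges es and distinct vertices vs
  (same positive length n), edge i joining vertex i and vertex (i+1) mod n.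
  (n = 1: a loop; n = 2: two parallel edges.)\<close>
definition is_cycle :: "('v,'e) mgraph \<Rightarrow> 'e set \<Rightarrow> 'e list \<Rightarrow> 'v list \<Rightarrow> bool" where
  "is_cycle G T es vs \<longleftrightarrow> es \<noteq> [] \<and> length vs = length es \<and> distinct es \<and> distinct vs \<and>
     set es \<subseteq> T \<and>
     (\<forall>i<length es. joins G (es ! i) (vs ! i) (vs ! (Suc i mod length es)))"

definition spanning_tree :: "('v,'e) mgraph \<Rightarrow> 'e set \<Rightarrow> bool" where
  "spanning_tree G T \<longleftrightarrow> T \<subseteq> edges G \<and> connected_by G T \<and> \<not> (\<exists>es vs. is_cycle G T es vs)"

definition ntrees :: "('v,'e) mgraph \<Rightarrow> nat" where
  "ntrees G = card {T. spanning_tree G T}"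

definition merge :: "'v \<Rightarrow> 'v \<Rightarrow> 'v \<Rightarrow> 'v" where
  "merge x y v = (if v = y then x else v)"

definition identify :: "'v \<Rightarrow> 'v \<Rightarrow> ('v,'e) mgraph \<Rightarrow> ('v,'e) mgraph" where
  "identify x y G = (merge x y ` verts G, edges G,
                     \<lambda>e. map_prod (merge x y) (merge x y) (ends G e))"

text \<open>t(H_xy), with the convention t(H_xx) = 0.\<close>
definition ntrees_id :: "('v,'e) mgraph \<Rightarrow> 'v \<Rightarrow> 'v \<Rightarrow> nat" where
  "ntrees_id G x y = (if x = y then 0 else ntrees (identify x y G))"

text \<open>t(G_{pq,st}) = t((G_pq)_st): s,t are viewed as vertices of G_pq (their images
  under the identification); the convention t(H_xx)=0 applies at both stages
  (if p = q then G_pp is degenerate and its count is 0, and so is that of any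
  further identification).\<close>
definition ntrees_id2 :: "('v,'e) mgraph \<Rightarrow> 'v \<Rightarrow> 'v \<Rightarrow> 'v \<Rightarrow> 'v \<Rightarrow> nat" where
  "ntrees_id2 G p q s t =
     (if p = q then 0 else ntrees_id (identify p q G) (merge p q s) (merge p q t))"

end

theory Submission
  imports Defs "HOL-Combinatorics.Permutations" "HOL-Library.FuncSet" "HOL-Library.Disjoint_Sets"
begin

(* By the matrix-tree theorem, t(G) = det L[W] for the Laplacian L of G with the row and
   column of a root p removed, W = V - {p}; identifying b with a adds row and column b of
   the Laplacian to row and column a.  Let K be the adjugate of L[W], extended by zero at p.
   Then t(G_xy) = K_xx + K_yy - 2 K_xy, while t(G) t(G_pq,st) is, by Jacobi's identity, a
   2 x 2 minor of the adjugate of the merged matrix, which equals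
   K_qq (K_ss + K_tt - 2 K_st) - (K_qs - K_qt)^2.  Substituting the first formula into the
   second gives the theorem; its second part is the case (s, t) := (p, s). *)

section \<open>Determinants of matrices indexed by a finite set\<close>

definition det_on :: "'i set \<Rightarrow> ('i \<Rightarrow> 'i \<Rightarrow> 'a::comm_ring_1) \<Rightarrow> 'a" where
  "det_on S A = (\<Sum>p | p permutes S. of_int (sign p) * (\<Prod>i\<in>S. A i (p i)))"

definition unit_vec :: "'i \<Rightarrow> 'i \<Rightarrow> 'a::zero_neq_one" where
  "unit_vec k = (\<lambda>j. if j = k then 1 else 0)"

lemma det_on_cong:
  assumes "\<And>i j. i \<in> S \<Longrightarrow> j \<in> S \<Longrightarrow> A i j = B i j"
  shows "det_on S A = det_on S B"
  unfolding det_on_def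
proof (rule sum.cong[OF refl])
  fix p assume "p \<in> {p. p permutes S}"
  then show "of_int (sign p) * (\<Prod>i\<in>S. A i (p i)) = of_int (sign p) * (\<Prod>i\<in>S. B i (p i))"
    using assms permutes_in_image[of p S] by (auto intro!: prod.cong)
qed

lemma det_on_empty [simp]: "det_on {} A = 1"
  unfolding det_on_def by simp

lemma det_on_singleton [simp]: "det_on {a} A = A a a"
  unfolding det_on_def by simp

lemma det_on_doubleton:
  assumes "a \<noteq> b"
  shows "det_on {a, b} A = A a a * A b b - A a b * A b a"
proof -
  let ?t = "Transposition.transpose a b"
  have perms: "{p. p permutes {a, b}} = {id, ?t}"
    by (auto simp: permutes_doubleton_iff)
  have "id \<noteq> ?t"
    using assms by (metis id_apply transpose_apply_first)
  then show ?thesis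
    using assms unfolding det_on_def perms by (simp add: sign_swap_id)
qed

lemma det_on_permute_rows:
  assumes fin: "finite S" and q: "q permutes S"
  shows "det_on S (\<lambda>i. A (q i)) = of_int (sign q) * det_on S A"
proof -
  have "det_on S (\<lambda>i. A (q i))
      = (\<Sum>p | p permutes S. of_int (sign p) * (\<Prod>k\<in>S. A k (p (inv q k))))"
    unfolding det_on_def
  proof (rule sum.cong[OF refl])
    fix p
    have "(\<Prod>i\<in>S. A (q i) (p i)) = (\<Prod>k\<in>S. A k (p (inv q k)))"
      using prod.permute[OF permutes_inv[OF q], of "\<lambda>i. A (q i) (p i)"]
      by (simp add: permutes_inverses[OF q] comp_def)
    then show "of_int (sign p) * (\<Prod>i\<in>S. A (q i) (p i))
        = of_int (sign p) * (\<Prod>k\<in>S. A k (p (inv q k)))" by simp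
  qed
  also have "\<dots> = (\<Sum>p | p permutes S.
      of_int (sign (p \<circ> q)) * (\<Prod>k\<in>S. A k ((p \<circ> q) (inv q k))))"
    by (rule sum_permutations_compose_right[OF q])
  also have "\<dots> = (\<Sum>p | p permutes S. of_int (sign q) * (of_int (sign p) * (\<Prod>k\<in>S. A k (p k))))"
  proof (rule sum.cong[OF refl])
    fix p assume "p \<in> {p. p permutes S}"
    then have "sign (p \<circ> q) = sign p * sign q"
      using fin q sign_compose permutation_permutes by blast
    then show "of_int (sign (p \<circ> q)) * (\<Prod>k\<in>S. A k ((p \<circ> q) (inv q k)))
        = of_int (sign q) * (of_int (sign p) * (\<Prod>k\<in>S. A k (p k)))"
      by (simp add: permutes_inverses[OF q])
  qed
  also have "\<dots> = of_int (sign q) * det_on S A"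
    unfolding det_on_def by (simp add: sum_distrib_left)
  finally show ?thesis .
qed

lemma det_on_transpose:
  assumes fin: "finite S"
  shows "det_on S (\<lambda>i j. A j i) = det_on S A"
proof -
  have "det_on S (\<lambda>i j. A j i) = (\<Sum>p | p permutes S. of_int (sign p) * (\<Prod>k\<in>S. A k (inv p k)))"
    unfolding det_on_def
  proof (rule sum.cong[OF refl])
    fix p assume "p \<in> {p. p permutes S}"
    then have p: "p permutes S" by simp
    have "(\<Prod>i\<in>S. A (p i) i) = (\<Prod>k\<in>S. A k (inv p k))"
      using prod.permute[OF permutes_inv[OF p], of "\<lambda>i. A (p i) i"]
      by (simp add: permutes_inverses[OF p] comp_def)
    then show "of_int (sign p) * (\<Prod>i\<in>S. A (p i) i) = of_int (sign p) * (\<Prod>k\<in>S. A k (inv p k))"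
      by simp
  qed
  also have "\<dots> = (\<Sum>p | p permutes S. of_int (sign (inv p)) * (\<Prod>k\<in>S. A k (inv (inv p) k)))"
    by (rule sum_permutations_inverse)
  also have "\<dots> = det_on S A"
    unfolding det_on_def
  proof (rule sum.cong[OF refl])
    fix p assume "p \<in> {p. p permutes S}"
    then have p: "p permutes S" by simp
    then have "permutation p" using fin permutation_permutes by blast
    then show "of_int (sign (inv p)) * (\<Prod>k\<in>S. A k (inv (inv p) k))
        = of_int (sign p) * (\<Prod>i\<in>S. A i (p i))"
      by (simp add: sign_inverse permutes_inv_inv[OF p])
  qed
  finally show ?thesis .
qed

text \<open>Pairing each permutation \<open>p\<close> with \<open>p \<circ> (i j)\<close> makes the terms cancel;
  unlike the argument \<open>det = - det\<close>, this also works in characteristic 2.\<close>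

lemma det_on_identical_rows:
  assumes fin: "finite S" and ij: "i \<in> S" "j \<in> S" "i \<noteq> j"
    and same: "\<And>k. k \<in> S \<Longrightarrow> A i k = A j k"
  shows "det_on S A = 0"
  unfolding det_on_def
proof (rule sum_involution_eq_0[where h = "\<lambda>p. p \<circ> Transposition.transpose i j"])
  let ?t = "Transposition.transpose i j"
  have t: "?t permutes S" by (rule permutes_swap_id[OF ij(1,2)])
  fix p assume "p \<in> {p. p permutes S}"
  then have p: "p permutes S" by simp
  show "p \<circ> ?t \<in> {p. p permutes S}" using permutes_compose[OF t p] by simp
  show "p \<circ> ?t \<circ> ?t = p" by (simp add: comp_assoc)
  show "p \<circ> ?t \<noteq> p"
    using ij(3) permutes_inj[OF p] by (metis comp_apply injD transpose_apply_first)
  have "sign (p \<circ> ?t) = sign p * sign ?t"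
    using fin p t sign_compose permutation_permutes by blast
  then have "sign (p \<circ> ?t) = - sign p"
    using ij(3) by (simp add: sign_swap_id)
  moreover have "(\<Prod>k\<in>S. A k ((p \<circ> ?t) k)) = (\<Prod>k\<in>S. A k (p k))"
  proof -
    have "(\<Prod>k\<in>S. A k ((p \<circ> ?t) k)) = (\<Prod>k\<in>S. A (?t k) (p k))"
      using prod.permute[OF t, of "\<lambda>k. A k ((p \<circ> ?t) k)"] by (simp add: comp_def)
    also have "\<dots> = (\<Prod>k\<in>S. A k (p k))"
      using same permutes_in_image[OF p]
      by (auto intro!: prod.cong simp: Transposition.transpose_def)
    finally show ?thesis .
  qed
  ultimately show "of_int (sign (p \<circ> ?t)) * (\<Prod>k\<in>S. A k ((p \<circ> ?t) k))
      + of_int (sign p) * (\<Prod>k\<in>S. A k (p k)) = 0"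
    by simp
qed

lemma prod_upd_row:
  assumes "finite S" "k \<in> S"
  shows "(\<Prod>i\<in>S. (A(k := v)) i (p i)) = v (p k) * (\<Prod>i\<in>S - {k}. A i (p i))"
proof -
  have "(\<Prod>i\<in>S. (A(k := v)) i (p i)) = (A(k := v)) k (p k) * (\<Prod>i\<in>S - {k}. (A(k := v)) i (p i))"
    by (rule prod.remove[OF assms])
  also have "(\<Prod>i\<in>S - {k}. (A(k := v)) i (p i)) = (\<Prod>i\<in>S - {k}. A i (p i))"
    by (rule prod.cong) auto
  finally show ?thesis by simp
qed

lemma det_on_row_expansion:
  assumes fin: "finite S" and k: "k \<in> S"
  shows "det_on S (A(k := v)) = (\<Sum>j\<in>S. v j * det_on S (A(k := unit_vec j)))"
proof -
  note upd = prod_upd_row[OF fin k]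
  let ?rest = "\<lambda>p. \<Prod>i\<in>S - {k}. A i (p i)"
  have "(\<Sum>j\<in>S. v j * det_on S (A(k := unit_vec j)))
      = (\<Sum>j\<in>S. \<Sum>p | p permutes S. v j * (of_int (sign p) * (unit_vec j (p k) * ?rest p)))"
    unfolding det_on_def sum_distrib_left upd ..
  also have "\<dots> = (\<Sum>p | p permutes S. \<Sum>j\<in>S. v j * (of_int (sign p) * (unit_vec j (p k) * ?rest p)))"
    by (rule sum.swap)
  also have "\<dots> = (\<Sum>p | p permutes S. of_int (sign p) * (v (p k) * ?rest p))"
  proof (rule sum.cong[OF refl])
    fix p assume "p \<in> {p. p permutes S}"
    then have pk: "p k \<in> S" using k permutes_in_image[of p S k] by simp
    have "(\<Sum>j\<in>S. v j * (of_int (sign p) * (unit_vec j (p k) * ?rest p)))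
        = (\<Sum>j\<in>S. if j = p k then v (p k) * (of_int (sign p) * ?rest p) else 0)"
      by (rule sum.cong) (auto simp: unit_vec_def)
    also have "\<dots> = of_int (sign p) * (v (p k) * ?rest p)"
      using fin pk by (simp add: sum.delta' mult_ac)
    finally show "(\<Sum>j\<in>S. v j * (of_int (sign p) * (unit_vec j (p k) * ?rest p)))
        = of_int (sign p) * (v (p k) * ?rest p)" .
  qed
  also have "\<dots> = det_on S (A(k := v))"
    unfolding det_on_def upd ..
  finally show ?thesis by (rule sym)
qed

lemma det_on_row_lincomb:
  assumes "finite S" "k \<in> S"
  shows "det_on S (A(k := (\<lambda>j. a * v j + b * w j)))
       = a * det_on S (A(k := v)) + b * det_on S (A(k := w))"
  unfolding det_on_row_expansion[OF assms, of A "\<lambda>j. a * v j + b * w j"]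
    det_on_row_expansion[OF assms, of A v] det_on_row_expansion[OF assms, of A w]
  by (simp add: sum.distrib sum_distrib_left algebra_simps)

lemma det_on_row_scale:
  assumes "finite S" "k \<in> S"
  shows "det_on S (A(k := (\<lambda>j. c * v j))) = c * det_on S (A(k := v))"
  using det_on_row_lincomb[OF assms, of A c v 0 v] by simp

lemma det_on_row_sum:
  assumes "finite S" "k \<in> S"
  shows "det_on S (A(k := (\<lambda>j. \<Sum>x\<in>X. B x j))) = (\<Sum>x\<in>X. det_on S (A(k := B x)))"
proof -
  have "det_on S (A(k := (\<lambda>j. \<Sum>x\<in>X. B x j)))
      = (\<Sum>j\<in>S. \<Sum>x\<in>X. B x j * det_on S (A(k := unit_vec j)))"
    unfolding det_on_row_expansion[OF assms, of A "\<lambda>j. \<Sum>x\<in>X. B x j"]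
    by (simp add: sum_distrib_right)
  also have "\<dots> = (\<Sum>x\<in>X. \<Sum>j\<in>S. B x j * det_on S (A(k := unit_vec j)))"
    by (rule sum.swap)
  also have "\<dots> = (\<Sum>x\<in>X. det_on S (A(k := B x)))"
    by (rule sum.cong[OF refl]) (rule det_on_row_expansion[OF assms, symmetric])
  finally show ?thesis .
qed

lemma det_on_zero_row:
  assumes "finite S" "k \<in> S" "\<And>j. j \<in> S \<Longrightarrow> A k j = 0"
  shows "det_on S A = 0"
proof -
  have "det_on S A = (\<Sum>j\<in>S. A k j * det_on S (A(k := unit_vec j)))"
    using det_on_row_expansion[OF assms(1,2), of A "A k"] by simp
  then show ?thesis using assms(3) by simp
qed

lemma permutes_fixing_iff:
  assumes "k \<in> S"
  shows "p permutes S \<and> p k = k \<longleftrightarrow> p permutes (S - {k})"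
proof
  assume "p permutes S \<and> p k = k"
  then show "p permutes (S - {k})"
    unfolding permutes_def by (metis Diff_iff singletonD)
next
  assume p: "p permutes (S - {k})"
  then show "p permutes S \<and> p k = k"
    using permutes_subset[OF p] permutes_not_in[OF p] by auto
qed

lemma det_on_unit_row:
  assumes fin: "finite S" and k: "k \<in> S" and unit: "\<And>j. j \<in> S \<Longrightarrow> A k j = unit_vec k j"
  shows "det_on S A = det_on (S - {k}) A"
proof -
  let ?g = "\<lambda>p. of_int (sign p) * (\<Prod>i\<in>S. A i (p i))"
  have "det_on S A = sum ?g {p. p permutes (S - {k})}"
    unfolding det_on_def
  proof (rule sum.mono_neutral_right)
    show "finite {p. p permutes S}" using fin finite_permutations by blast
    show "{p. p permutes (S - {k})} \<subseteq> {p. p permutes S}"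
      using permutes_fixing_iff[OF k] by blast
    show "\<forall>p\<in>{p. p permutes S} - {p. p permutes (S - {k})}. ?g p = 0"
    proof
      fix p assume "p \<in> {p. p permutes S} - {p. p permutes (S - {k})}"
      then have p: "p permutes S" "p k \<noteq> k" using permutes_fixing_iff[OF k] by auto
      then have "A k (p k) = 0"
        using unit[of "p k"] k permutes_in_image[of p S k] by (simp add: unit_vec_def)
      then show "?g p = 0" using fin k by (simp add: prod.remove)
    qed
  qed
  also have "\<dots> = det_on (S - {k}) A"
    unfolding det_on_def
  proof (rule sum.cong[OF refl])
    fix p assume "p \<in> {p. p permutes (S - {k})}"
    then have "p k = k" using permutes_fixing_iff[OF k] by blast
    then show "?g p = of_int (sign p) * (\<Prod>i\<in>S - {k}. A i (p i))"
      using fin k unit[of k] by (simp add: prod.remove unit_vec_def)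
  qed
  finally show ?thesis .
qed

lemma det_on_unit_rows:
  assumes fin: "finite S" and T: "T \<subseteq> S"
    and unit: "\<And>i j. i \<in> S - T \<Longrightarrow> j \<in> S \<Longrightarrow> A i j = unit_vec i j"
  shows "det_on S A = det_on T A"
proof -
  have "finite (S - T)" using fin by simp
  then show ?thesis using fin T unit
  proof (induction "S - T" arbitrary: S rule: finite_induct)
    case empty
    then show ?case by (simp add: Diff_eq_empty_iff subset_antisym)
  next
    case (insert x F)
    have x: "x \<in> S" "x \<notin> T" using insert.hyps(4) by blast+
    have "det_on S A = det_on (S - {x}) A"
      using insert.prems x by (intro det_on_unit_row) auto
    also have "\<dots> = det_on T A"
      using insert.hyps(2,4) insert.prems x by (intro insert.hyps(3)) auto
    finally show ?case .
  qed
qed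

lemma det_on_unit_cols:
  assumes fin: "finite S" and T: "T \<subseteq> S"
    and unit: "\<And>i j. j \<in> S - T \<Longrightarrow> i \<in> S \<Longrightarrow> A i j = unit_vec j i"
  shows "det_on S A = det_on T A"
proof -
  have "det_on S A = det_on S (\<lambda>i j. A j i)" by (rule det_on_transpose[OF fin, symmetric])
  also have "\<dots> = det_on T (\<lambda>i j. A j i)"
    by (rule det_on_unit_rows[OF fin T]) (auto simp: unit)
  also have "\<dots> = det_on T A" using det_on_transpose[of T A] fin T finite_subset by blast
  finally show ?thesis .
qed

definition mat_mult_on ::
    "'i set \<Rightarrow> ('i \<Rightarrow> 'i \<Rightarrow> 'a::comm_ring_1) \<Rightarrow> ('i \<Rightarrow> 'i \<Rightarrow> 'a) \<Rightarrow> 'i \<Rightarrow> 'i \<Rightarrow> 'a" where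
  "mat_mult_on S A B = (\<lambda>i j. \<Sum>k\<in>S. A i k * B k j)"

lemma det_on_mult_expansion:
  assumes fin: "finite S"
  shows "det_on S (mat_mult_on S A B)
       = (\<Sum>g | g \<in> S \<rightarrow>\<^sub>E S \<and> inj_on g S. (\<Prod>i\<in>S. A i (g i)) * det_on S (\<lambda>i. B (g i)))"
proof -
  let ?P = "{p. p permutes S}"
  let ?F = "S \<rightarrow>\<^sub>E S"
  have "det_on S (mat_mult_on S A B)
      = (\<Sum>p\<in>?P. of_int (sign p) * (\<Sum>g\<in>?F. \<Prod>i\<in>S. A i (g i) * B (g i) (p i)))"
    unfolding det_on_def mat_mult_on_def
    by (rule sum.cong[OF refl]) (simp only: prod_sum_PiE[OF fin fin])
  also have "\<dots> = (\<Sum>p\<in>?P. \<Sum>g\<in>?F. of_int (sign p) * ((\<Prod>i\<in>S. A i (g i)) * (\<Prod>i\<in>S. B (g i) (p i))))"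
    by (simp only: sum_distrib_left prod.distrib)
  also have "\<dots> = (\<Sum>g\<in>?F. \<Sum>p\<in>?P. of_int (sign p) * ((\<Prod>i\<in>S. A i (g i)) * (\<Prod>i\<in>S. B (g i) (p i))))"
    by (rule sum.swap)
  also have "\<dots> = (\<Sum>g\<in>?F. (\<Prod>i\<in>S. A i (g i)) * det_on S (\<lambda>i. B (g i)))"
    unfolding det_on_def by (simp only: sum_distrib_left mult_ac)
  also have "\<dots> = (\<Sum>g | g \<in> ?F \<and> inj_on g S. (\<Prod>i\<in>S. A i (g i)) * det_on S (\<lambda>i. B (g i)))"
  proof (rule sum.mono_neutral_right)
    show "finite ?F" using fin by (simp add: finite_PiE)
    show "\<forall>g\<in>?F - {g. g \<in> ?F \<and> inj_on g S}. (\<Prod>i\<in>S. A i (g i)) * det_on S (\<lambda>i. B (g i)) = 0"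
    proof
      fix g assume "g \<in> ?F - {g. g \<in> ?F \<and> inj_on g S}"
      then obtain i j where ij: "i \<in> S" "j \<in> S" "i \<noteq> j" "g i = g j"
        unfolding inj_on_def by blast
      then have "det_on S (\<lambda>i. B (g i)) = 0"
        by (intro det_on_identical_rows[OF fin ij(1-3)]) simp
      then show "(\<Prod>i\<in>S. A i (g i)) * det_on S (\<lambda>i. B (g i)) = 0" by simp
    qed
  qed blast
  finally show ?thesis .
qed

lemma det_on_mult:
  assumes fin: "finite S"
  shows "det_on S (mat_mult_on S A B) = det_on S A * det_on S B"
proof -
  let ?P = "{p. p permutes S}"
  let ?F = "S \<rightarrow>\<^sub>E S"
  let ?H = "\<lambda>g. (\<Prod>i\<in>S. A i (g i)) * det_on S (\<lambda>i. B (g i))"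
  let ?ext = "\<lambda>g i. if i \<in> S then g i else i"
  have "det_on S (mat_mult_on S A B) = (\<Sum>g\<in>{g\<in>?F. inj_on g S}. ?H g)"
    by (rule det_on_mult_expansion[OF fin])
  also have "\<dots> = (\<Sum>p\<in>?P. of_int (sign p) * (\<Prod>i\<in>S. A i (p i)) * det_on S B)"
  proof (rule sum.reindex_bij_witness[where i = "\<lambda>p. restrict p S" and j = ?ext])
    fix g assume g: "g \<in> {g\<in>?F. inj_on g S}"
    show "restrict (?ext g) S = g"
      using g by (auto simp: fun_eq_iff restrict_def PiE_def extensional_def)
    have pg: "?ext g permutes S"
      by (rule inj_imp_permutes[OF _ fin]) (use g in \<open>auto simp: inj_on_def PiE_def\<close>)
    then show "?ext g \<in> ?P" by simp
    have "det_on S (\<lambda>i. B (g i)) = det_on S (\<lambda>i. B (?ext g i))"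
      by (rule det_on_cong) simp
    also have "\<dots> = of_int (sign (?ext g)) * det_on S B" by (rule det_on_permute_rows[OF fin pg])
    finally show "of_int (sign (?ext g)) * (\<Prod>i\<in>S. A i (?ext g i)) * det_on S B = ?H g"
      by simp
  next
    fix p assume "p \<in> ?P"
    then have p: "p permutes S" by simp
    show "?ext (restrict p S) = p"
      using permutes_not_in[OF p] by (auto simp: fun_eq_iff)
    show "restrict p S \<in> {g\<in>?F. inj_on g S}"
      using permutes_inj_on[OF p] permutes_in_image[OF p] by (auto simp: inj_on_def)
  qed
  also have "\<dots> = det_on S A * det_on S B"
    unfolding det_on_def by (simp add: sum_distrib_right)
  finally show ?thesis .
qed

text \<open>Add all other columns to column \<open>k\<close>: the result has a zero column, and by
  multilinearity it differs from \<open>A\<close> only by determinants with two equal columns.\<close>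

lemma det_on_zero_row_sums:
  assumes fin: "finite S" and ne: "S \<noteq> {}" and zero: "\<And>i. i \<in> S \<Longrightarrow> (\<Sum>j\<in>S. A i j) = 0"
  shows "det_on S A = 0"
proof -
  obtain k where k: "k \<in> S" using ne by blast
  let ?At = "\<lambda>i j. A j i"
  have "det_on S A = det_on S (?At(k := ?At k))"
    using det_on_transpose[OF fin, of A] fun_upd_triv[of ?At k] by simp
  also have "\<dots> = (\<Sum>x\<in>S. det_on S (?At(k := ?At x)))"
  proof (rule sum.mono_neutral_right[OF fin, of "{k}", simplified, symmetric])
    show "k \<in> S" by (rule k)
    show "\<forall>x\<in>S - {k}. det_on S (?At(k := ?At x)) = 0"
    proof
      fix x assume x: "x \<in> S - {k}"
      show "det_on S (?At(k := ?At x)) = 0"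
        by (rule det_on_identical_rows[OF fin k, of x]) (use x in auto)
    qed
  qed
  also have "\<dots> = det_on S (?At(k := (\<lambda>j. \<Sum>x\<in>S. ?At x j)))"
    by (rule det_on_row_sum[OF fin k, symmetric])
  also have "\<dots> = 0"
    by (rule det_on_zero_row[OF fin k]) (simp add: zero)
  finally show ?thesis .
qed

lemma det_on_scaled_unit_col:
  assumes fin: "finite S" and k: "k \<in> S" and col: "\<And>i. i \<in> S \<Longrightarrow> A i k = c * unit_vec k i"
  shows "det_on S A = c * det_on (S - {k}) A"
proof -
  let ?At = "\<lambda>i j. A j i"
  have "det_on S A = det_on S (?At(k := (\<lambda>j. c * unit_vec k j)))"
    unfolding det_on_transpose[OF fin, of A, symmetric] by (rule det_on_cong) (simp add: col)
  also have "\<dots> = c * det_on S (?At(k := unit_vec k))"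
    by (rule det_on_row_scale[OF fin k])
  also have "det_on S (?At(k := unit_vec k)) = det_on (S - {k}) (?At(k := unit_vec k))"
    by (rule det_on_unit_row[OF fin k]) simp
  also have "\<dots> = det_on (S - {k}) ?At" by (rule det_on_cong) auto
  also have "\<dots> = det_on (S - {k}) A" by (rule det_on_transpose) (use fin in simp)
  finally show ?thesis .
qed

definition adj_on :: "'i set \<Rightarrow> ('i \<Rightarrow> 'i \<Rightarrow> 'a::comm_ring_1) \<Rightarrow> 'i \<Rightarrow> 'i \<Rightarrow> 'a" where
  "adj_on S A x y = det_on S (A(y := unit_vec x))"

lemma det_on_row_expansion_adj:
  assumes "finite S" "k \<in> S"
  shows "det_on S (A(k := v)) = (\<Sum>l\<in>S. v l * adj_on S A l k)"
  unfolding adj_on_def by (rule det_on_row_expansion[OF assms])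

lemma mult_adj_on:
  assumes fin: "finite S" and ij: "i \<in> S" "j \<in> S"
  shows "(\<Sum>k\<in>S. A i k * adj_on S A k j) = (if i = j then det_on S A else 0)"
proof -
  have "(\<Sum>k\<in>S. A i k * adj_on S A k j) = det_on S (A(j := A i))"
    by (rule det_on_row_expansion_adj[OF fin ij(2), symmetric])
  also have "\<dots> = (if i = j then det_on S A else 0)"
  proof (cases "i = j")
    case False
    then show ?thesis
      using det_on_identical_rows[OF fin ij, of "A(j := A i)"] by simp
  qed simp
  finally show ?thesis .
qed

lemma adj_on_diag:
  assumes "finite S" "y \<in> S"
  shows "adj_on S A y y = det_on (S - {y}) A"
proof -
  have "adj_on S A y y = det_on (S - {y}) (A(y := unit_vec y))"
    unfolding adj_on_def by (rule det_on_unit_row[OF assms]) simp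
  also have "\<dots> = det_on (S - {y}) A" by (rule det_on_cong) auto
  finally show ?thesis .
qed

lemma det_on_unit_col_eq_unit_row:
  assumes fin: "finite S" and xy: "x \<in> S" "y \<in> S"
  shows "det_on S (\<lambda>i j. if j = y then unit_vec x i else A i j) = det_on S (A(x := unit_vec y))"
  unfolding det_on_def
proof (rule sum.cong[OF refl])
  fix p assume "p \<in> {p. p permutes S}"
  then have p: "p permutes S" by simp
  show "of_int (sign p) * (\<Prod>i\<in>S. if p i = y then unit_vec x i else A i (p i))
      = of_int (sign p) * (\<Prod>i\<in>S. (A(x := unit_vec y)) i (p i))"
  proof (cases "p x = y")
    case True
    then have "(\<Prod>i\<in>S. if p i = y then unit_vec x i else A i (p i))
        = (\<Prod>i\<in>S. (A(x := unit_vec y)) i (p i))"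
      using permutes_inj[OF p] by (intro prod.cong) (auto simp: unit_vec_def inj_def)
    then show ?thesis by simp
  next
    case False
    define i0 where "i0 = inv p y"
    have "p i0 = y" using i0_def permutes_inverses[OF p] by simp
    moreover have "i0 \<in> S" using xy(2) permutes_in_image[OF p] calculation by metis
    moreover have "i0 \<noteq> x" using calculation False by auto
    ultimately have "(\<Prod>i\<in>S. if p i = y then unit_vec x i else A i (p i)) = 0"
      by (intro prod_zero[OF fin]) (auto intro!: bexI[of _ i0] simp: unit_vec_def)
    moreover have "(\<Prod>i\<in>S. (A(x := unit_vec y)) i (p i)) = 0"
      by (rule prod_zero[OF fin]) (use xy False in \<open>auto intro!: bexI[of _ x] simp: unit_vec_def\<close>)
    ultimately show ?thesis by simp
  qed
qed

lemma adj_on_sym: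
  assumes fin: "finite S" and xy: "x \<in> S" "y \<in> S" and sym: "\<And>i j. A i j = A j i"
  shows "adj_on S A x y = adj_on S A y x"
proof -
  have "adj_on S A x y = det_on S (\<lambda>i j. (A(y := unit_vec x)) j i)"
    unfolding adj_on_def by (rule det_on_transpose[OF fin, symmetric])
  also have "\<dots> = det_on S (\<lambda>i j. if j = y then unit_vec x i else A i j)"
    by (rule det_on_cong) (auto simp: sym)
  also have "\<dots> = adj_on S A y x"
    unfolding adj_on_def by (rule det_on_unit_col_eq_unit_row[OF fin xy])
  finally show ?thesis .
qed

text \<open>Multiplying \<open>A\<close> by the matrix \<open>M\<close> that agrees with the identity except for the
  columns \<open>a\<close>, \<open>b\<close>, taken from the adjugate, turns these two columns into multiples of
  unit vectors.\<close>

lemma jacobi_adj_on: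
  fixes A :: "'i \<Rightarrow> 'i \<Rightarrow> 'a::idom"
  assumes fin: "finite S" and ab: "a \<in> S" "b \<in> S" "a \<noteq> b" and D: "det_on S A \<noteq> 0"
  shows "adj_on S A a a * adj_on S A b b - adj_on S A a b * adj_on S A b a
       = det_on S A * det_on (S - {a, b}) A"
proof -
  let ?D = "det_on S A"
  define M where "M = (\<lambda>i j. if j = a \<or> j = b then adj_on S A i j else unit_vec j i)"
  let ?N = "\<lambda>i j. if j = a \<or> j = b then (if i = j then ?D else 0) else A i j"
  have AM: "mat_mult_on S A M i j = ?N i j" if ij: "i \<in> S" "j \<in> S" for i j
  proof (cases "j = a \<or> j = b")
    case True
    then show ?thesis unfolding mat_mult_on_def M_def using mult_adj_on[OF fin ij, of A] by simp
  next
    case False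
    then have "mat_mult_on S A M i j = (\<Sum>k\<in>S. if k = j then A i k else 0)"
      unfolding mat_mult_on_def M_def by (intro sum.cong) (auto simp: unit_vec_def)
    also have "\<dots> = A i j" using fin ij by (simp add: sum.delta')
    finally show ?thesis using False by simp
  qed
  have "det_on S M = det_on {a, b} M"
    by (rule det_on_unit_cols[OF fin]) (use ab in \<open>auto simp: M_def\<close>)
  also have "\<dots> = adj_on S A a a * adj_on S A b b - adj_on S A a b * adj_on S A b a"
    using ab by (simp add: det_on_doubleton M_def)
  finally have det_M: "det_on S M = adj_on S A a a * adj_on S A b b - adj_on S A a b * adj_on S A b a" .
  have "?D * det_on S M = det_on S ?N"
    unfolding det_on_mult[OF fin, symmetric] by (rule det_on_cong) (rule AM)
  also have "\<dots> = ?D * det_on (S - {a}) ?N"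
    by (rule det_on_scaled_unit_col[OF fin ab(1)]) (auto simp: unit_vec_def)
  also have "det_on (S - {a}) ?N = ?D * det_on (S - {a} - {b}) ?N"
    by (rule det_on_scaled_unit_col) (use fin ab in \<open>auto simp: unit_vec_def\<close>)
  also have "det_on (S - {a} - {b}) ?N = det_on (S - {a, b}) A"
    by (subst Diff_insert2[symmetric]) (rule det_on_cong, auto)
  finally have "det_on S M = ?D * det_on (S - {a, b}) A" using D by simp
  then show ?thesis using det_M by simp
qed

text \<open>Identifying the vertex \<open>b\<close> of a graph with \<open>a\<close> does this to the Laplacian; it is the
  congruence by a transvection.\<close>

definition merge_rowcol :: "'i \<Rightarrow> 'i \<Rightarrow> ('i \<Rightarrow> 'i \<Rightarrow> 'a::comm_ring_1) \<Rightarrow> 'i \<Rightarrow> 'i \<Rightarrow> 'a" where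
  "merge_rowcol a b A = (\<lambda>i j. A i j + (if i = a then A b j else 0) + (if j = a then A i b else 0)
                               + (if i = a \<and> j = a then A b b else 0))"

definition transvection :: "'i \<Rightarrow> 'i \<Rightarrow> 'i \<Rightarrow> 'i \<Rightarrow> 'a::comm_ring_1" where
  "transvection a b = (\<lambda>i j. unit_vec i j + (if i = b \<and> j = a then 1 else 0))"

lemma merge_rowcol_sym:
  assumes "\<And>i j. A i j = A j i"
  shows "merge_rowcol a b A i j = merge_rowcol a b A j i"
  unfolding merge_rowcol_def using assms by auto

lemma det_on_transvection:
  assumes fin: "finite S" and ab: "a \<in> S" "b \<in> S" "a \<noteq> b"
  shows "det_on S (transvection a b) = 1"
proof -
  have "det_on S (transvection a b) = det_on {b} (transvection a b)"
    by (rule det_on_unit_rows[OF fin]) (use ab in \<open>auto simp: transvection_def\<close>)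
  then show ?thesis using ab by (simp add: transvection_def unit_vec_def)
qed

lemma merge_rowcol_eq_mult:
  assumes fin: "finite S" and ab: "a \<in> S" "b \<in> S" "a \<noteq> b" and ij: "i \<in> S" "j \<in> S"
  shows "merge_rowcol a b A i j
       = mat_mult_on S (mat_mult_on S (\<lambda>i k. transvection a b k i) A) (transvection a b) i j"
proof -
  have row: "(\<Sum>k\<in>S. transvection a b k i * A k l) = A i l + (if i = a then A b l else 0)" for l
  proof -
    have "(\<Sum>k\<in>S. transvection a b k i * A k l)
        = (\<Sum>k\<in>S. (if k = i then A k l else 0) + (if k = b \<and> i = a then A k l else 0))"
      by (rule sum.cong) (auto simp: transvection_def unit_vec_def)
    then show ?thesis using fin ij ab by (simp add: sum.distrib sum.delta')
  qed
  have "mat_mult_on S (mat_mult_on S (\<lambda>i k. transvection a b k i) A) (transvection a b) i j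
      = (\<Sum>l\<in>S. (A i l + (if i = a then A b l else 0)) * transvection a b l j)"
    by (simp add: mat_mult_on_def row)
  also have "\<dots> = (\<Sum>l\<in>S. (if l = j then A i l + (if i = a then A b l else 0) else 0)
        + (if l = b \<and> j = a then A i l + (if i = a then A b l else 0) else 0))"
    by (rule sum.cong) (auto simp: transvection_def unit_vec_def algebra_simps)
  also have "\<dots> = merge_rowcol a b A i j"
    using fin ij ab by (simp add: sum.distrib sum.delta' merge_rowcol_def)
  finally show ?thesis by simp
qed

lemma det_on_merge_rowcol:
  fixes A :: "'i \<Rightarrow> 'i \<Rightarrow> 'a::comm_ring_1"
  assumes fin: "finite S" and ab: "a \<in> S" "b \<in> S" "a \<noteq> b"
  shows "det_on S (merge_rowcol a b A) = det_on S A"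
proof -
  have "det_on S (merge_rowcol a b A)
      = det_on S (mat_mult_on S (mat_mult_on S (\<lambda>i k. transvection a b k i) A) (transvection a b))"
    by (rule det_on_cong) (rule merge_rowcol_eq_mult[OF fin ab])
  also have "\<dots> = det_on S (\<lambda>i k. transvection a b k i) * det_on S A * det_on S (transvection a b)"
    unfolding det_on_mult[OF fin] ..
  also have "det_on S (\<lambda>i k. transvection a b k i :: 'a) = det_on S (transvection a b)"
    by (rule det_on_transpose[OF fin])
  also have "det_on S (transvection a b :: 'i \<Rightarrow> 'i \<Rightarrow> 'a) = 1"
    by (rule det_on_transvection[OF fin ab])
  finally show ?thesis by simp
qed

lemma det_on_swap_upd_rows:
  assumes fin: "finite S" and ab: "a \<in> S" "b \<in> S" "a \<noteq> b"
  shows "det_on S (A(b := u, a := A b)) = - det_on S (A(a := u))"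
proof -
  let ?t = "Transposition.transpose a b"
  let ?B = "A(b := u, a := A b)"
  have "det_on S (A(a := u)) = det_on S (\<lambda>i. ?B (?t i))"
    by (rule det_on_cong) (use ab in \<open>auto simp: Transposition.transpose_def\<close>)
  also have "\<dots> = of_int (sign ?t) * det_on S ?B"
    by (rule det_on_permute_rows[OF fin permutes_swap_id[OF ab(1,2)]])
  also have "sign ?t = -1" using ab by (simp add: sign_swap_id)
  finally show ?thesis by (simp only: of_int_minus of_int_1 mult_minus1 minus_minus)
qed

lemma det_on_add_row_upd_row:
  assumes fin: "finite S" and ab: "a \<in> S" "b \<in> S" "a \<noteq> b"
  shows "det_on S (A(a := (\<lambda>j. A a j + A b j), b := u)) = det_on S (A(b := u)) - det_on S (A(a := u))"
proof -
  have "A(a := (\<lambda>j. A a j + A b j), b := u) = (A(b := u))(a := (\<lambda>j. 1 * A a j + 1 * A b j))"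
    using ab(3) by (simp add: fun_upd_twist)
  then have "det_on S (A(a := (\<lambda>j. A a j + A b j), b := u))
      = det_on S (A(b := u, a := A a)) + det_on S (A(b := u, a := A b))"
    using det_on_row_lincomb[OF fin ab(1), of "A(b := u)" 1 "A a" 1 "A b"] ab(3) by simp
  also have "A(b := u, a := A a) = A(b := u)"
    using ab(3) by (auto simp: fun_eq_iff)
  also have "det_on S (A(b := u, a := A b)) = - det_on S (A(a := u))"
    by (rule det_on_swap_upd_rows[OF fin ab])
  finally show ?thesis by (simp only: diff_conv_add_uminus)
qed

lemma det_on_Diff_merge_rowcol:
  assumes fin: "finite S" and ab: "a \<in> S" "b \<in> S" "a \<noteq> b"
  shows "det_on (S - {b}) (merge_rowcol a b A)
       = adj_on S A a a + adj_on S A b b - adj_on S A a b - adj_on S A b a"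
proof -
  define A' where "A' = A(a := (\<lambda>j. A a j + A b j))"
  define N where "N = A'(b := (\<lambda>j. 1 * unit_vec b j + (-1) * unit_vec a j))"
  have N_mult: "((merge_rowcol a b A)(b := unit_vec b)) i j = mat_mult_on S N (transvection a b) i j"
    if ij: "i \<in> S" "j \<in> S" for i j
  proof -
    have "mat_mult_on S N (transvection a b) i j
        = (\<Sum>l\<in>S. (if l = j then N i l else 0) + (if l = b \<and> j = a then N i l else 0))"
      unfolding mat_mult_on_def
      by (rule sum.cong) (auto simp: transvection_def unit_vec_def algebra_simps)
    also have "\<dots> = N i j + (if j = a then N i b else 0)"
      using fin ij ab by (simp add: sum.distrib sum.delta')
    finally show ?thesis
      using ab by (auto simp: N_def A'_def merge_rowcol_def unit_vec_def)
  qed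
  have "det_on (S - {b}) (merge_rowcol a b A) = det_on (S - {b}) ((merge_rowcol a b A)(b := unit_vec b))"
    by (rule det_on_cong) auto
  also have "\<dots> = det_on S ((merge_rowcol a b A)(b := unit_vec b))"
    by (rule det_on_unit_row[OF fin ab(2), symmetric]) simp
  also have "\<dots> = det_on S (mat_mult_on S N (transvection a b))"
    by (rule det_on_cong) (rule N_mult)
  also have "\<dots> = det_on S N"
    unfolding det_on_mult[OF fin] det_on_transvection[OF fin ab] by simp
  also have "\<dots> = det_on S (A'(b := unit_vec b)) - det_on S (A'(b := unit_vec a))"
    unfolding N_def det_on_row_lincomb[OF fin ab(2)] by simp
  also have "\<dots> = adj_on S A a a + adj_on S A b b - adj_on S A a b - adj_on S A b a"
    unfolding A'_def det_on_add_row_upd_row[OF fin ab] adj_on_def by simp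
  finally show ?thesis .
qed

text \<open>Replacing row \<open>q\<close> of the merged matrix by a unit vector amounts to merging after
  replacing row \<open>q\<close> of \<open>A\<close> by a suitable vector, and merging preserves the determinant.\<close>

lemma adj_on_merge_rowcol:
  assumes fin: "finite S" and st: "s \<in> S" "t \<in> S" "s \<noteq> t" and q: "q \<in> S" "q \<noteq> s" "q \<noteq> t"
  shows "adj_on S (merge_rowcol s t A) q q = adj_on S A q q"
    and "adj_on S (merge_rowcol s t A) t q = adj_on S A t q - adj_on S A s q"
proof -
  have upd: "adj_on S (merge_rowcol s t A) x q = det_on S (A(q := w))"
    if w: "\<And>j. w j + (if j = s then w t else 0) = unit_vec x j" for x w
  proof -
    have "adj_on S (merge_rowcol s t A) x q = det_on S (merge_rowcol s t (A(q := w)))"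
      unfolding adj_on_def
    proof (rule det_on_cong)
      fix i j assume "i \<in> S" "j \<in> S"
      show "((merge_rowcol s t A)(q := unit_vec x)) i j = merge_rowcol s t (A(q := w)) i j"
        using q w[of j] by (cases "i = q"; cases "j = s") (simp_all add: merge_rowcol_def)
    qed
    also have "\<dots> = det_on S (A(q := w))" by (rule det_on_merge_rowcol[OF fin st])
    finally show ?thesis .
  qed
  show "adj_on S (merge_rowcol s t A) q q = adj_on S A q q"
    unfolding adj_on_def[of S A] by (rule upd) (use q in \<open>auto simp: unit_vec_def\<close>)
  have "adj_on S (merge_rowcol s t A) t q = det_on S (A(q := (\<lambda>j. 1 * unit_vec t j + (-1) * unit_vec s j)))"
    by (rule upd) (use st in \<open>auto simp: unit_vec_def\<close>)
  also have "\<dots> = adj_on S A t q - adj_on S A s q"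
    unfolding adj_on_def det_on_row_lincomb[OF fin q(1)] by simp
  finally show "adj_on S (merge_rowcol s t A) t q = adj_on S A t q - adj_on S A s q" .
qed

section \<open>Walks, forests and spanning trees\<close>

definition reach :: "('v,'e) mgraph \<Rightarrow> 'e set \<Rightarrow> 'v \<Rightarrow> 'v \<Rightarrow> bool" where
  "reach G T = (\<lambda>a b. \<exists>e\<in>T. joins G e a b)\<^sup>*\<^sup>*"

text \<open>Acyclicity, phrased edgewise: no edge of \<open>T\<close> is a loop or is bypassed by the others.\<close>

definition forest :: "('v,'e) mgraph \<Rightarrow> 'e set \<Rightarrow> bool" where
  "forest G T \<longleftrightarrow> (\<forall>f\<in>T. fst (ends G f) \<noteq> snd (ends G f) \<and>
      \<not> reach G (T - {f}) (fst (ends G f)) (snd (ends G f)))"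

definition is_path :: "('v,'e) mgraph \<Rightarrow> 'e set \<Rightarrow> 'e list \<Rightarrow> 'v list \<Rightarrow> bool" where
  "is_path G T es vs \<longleftrightarrow> vs \<noteq> [] \<and> length vs = Suc (length es) \<and> distinct vs \<and> set es \<subseteq> T \<and>
     (\<forall>i<length es. joins G (es ! i) (vs ! i) (vs ! Suc i))"

lemma connected_by_reach: "connected_by G T \<longleftrightarrow> (\<forall>x\<in>verts G. \<forall>y\<in>verts G. reach G T x y)"
  unfolding connected_by_def reach_def ..

lemma reach_refl [simp]: "reach G T a a"
  unfolding reach_def by simp

lemma reach_step: "e \<in> T \<Longrightarrow> joins G e a b \<Longrightarrow> reach G T a b"
  unfolding reach_def by (rule r_into_rtranclp) blast

lemma reach_trans: "reach G T a b \<Longrightarrow> reach G T b c \<Longrightarrow> reach G T a c"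
  unfolding reach_def by (rule rtranclp_trans)

lemma reach_sym: "reach G T a b \<Longrightarrow> reach G T b a"
  unfolding reach_def
  by (rule sympD[OF symp_rtranclp]) (auto intro!: sympI simp: joins_def)

lemma reach_mono: "reach G S a b \<Longrightarrow> S \<subseteq> T \<Longrightarrow> reach G T a b"
  unfolding reach_def by (erule rtranclp_mono[THEN predicate2D, rotated]) blast

lemma reach_ends: "joins G f a b \<Longrightarrow> reach G T a b \<Longrightarrow> reach G T (fst (ends G f)) (snd (ends G f))"
  unfolding joins_def by (auto intro: reach_sym)

lemma reach_insert_cases:
  assumes "reach G (insert g S) u z" and g: "ends G g = (a, b)"
  shows "reach G S u z \<or> (reach G S u a \<and> reach G S b z) \<or> (reach G S u b \<and> reach G S a z)"
  using assms(1) unfolding reach_def[of G "insert g S"]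
proof (induction rule: rtranclp_induct)
  case (step c d)
  from step.hyps(2) obtain h where h: "h \<in> insert g S" "joins G h c d" by blast
  show ?case
  proof (cases "h = g")
    case True
    then have "(c = a \<and> d = b) \<or> (c = b \<and> d = a)" using h(2) g unfolding joins_def by auto
    then show ?thesis using step.IH by auto
  next
    case False
    then have "reach G S c d" using h by (intro reach_step[of h]) auto
    then show ?thesis using step.IH by (blast intro: reach_trans)
  qed
qed simp

lemma reach_Diff_bypassed_edge:
  assumes f: "reach G (T - {f}) (fst (ends G f)) (snd (ends G f))" and "reach G T u z"
  shows "reach G (T - {f}) u z"
proof -
  have "reach G (insert f (T - {f})) u z" using assms(2) by (rule reach_mono) blast
  then show ?thesis
    using reach_insert_cases[OF _ prod.collapse[symmetric]] f
    by (meson reach_sym reach_trans)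
qed

lemma reach_imp_path:
  assumes "reach G T u w"
  shows "\<exists>es vs. is_path G T es vs \<and> hd vs = u \<and> last vs = w"
  using assms unfolding reach_def
proof (induction rule: rtranclp_induct)
  case base
  show ?case by (rule exI[of _ "[]"], rule exI[of _ "[u]"]) (simp add: is_path_def)
next
  case (step z w)
  obtain es vs where p: "is_path G T es vs" "hd vs = u" "last vs = z" using step.IH by blast
  obtain g where g: "g \<in> T" "joins G g z w" using step.hyps(2) by blast
  have len: "length vs = Suc (length es)" "vs \<noteq> []" using p(1) by (auto simp: is_path_def)
  show ?case
  proof (cases "w \<in> set vs")
    case True
    then obtain k where k: "k < length vs" "vs ! k = w" by (auto simp: in_set_conv_nth)
    have "is_path G T (take k es) (take (Suc k) vs)"
      using p(1) k len unfolding is_path_def by (auto simp: min_def dest: in_set_takeD)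
    moreover have "hd (take (Suc k) vs) = u" using p(2) len by (simp add: hd_take)
    moreover have "last (take (Suc k) vs) = w" using k by (simp add: take_Suc_conv_app_nth)
    ultimately show ?thesis by blast
  next
    case False
    have "vs ! length es = z" using p(3) len by (simp add: last_conv_nth)
    then have "is_path G T (es @ [g]) (vs @ [w])"
      using p(1) False g len unfolding is_path_def
      by (auto simp: nth_append less_Suc_eq)
    then show ?thesis using p(2) len by fastforce
  qed
qed

lemma is_path_distinct_edges:
  assumes "is_path G T es vs"
  shows "distinct es"
proof -
  have len: "length vs = Suc (length es)" and dist: "distinct vs"
    and J: "\<And>i. i < length es \<Longrightarrow> joins G (es ! i) (vs ! i) (vs ! Suc i)"
    using assms by (auto simp: is_path_def)
  show ?thesis
  proof (rule distinct_conv_nth[THEN iffD2], intro allI impI notI)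
    fix i j assume ij: "i < length es" "j < length es" "i \<noteq> j" and eq: "es ! i = es ! j"
    have "vs ! i = vs ! j \<or> vs ! i = vs ! Suc j" "vs ! Suc i = vs ! j \<or> vs ! Suc i = vs ! Suc j"
      using J[OF ij(1)] J[OF ij(2)] eq unfolding joins_def by auto
    then show False using dist ij len by (auto simp: nth_eq_iff_index_eq)
  qed
qed

lemma is_cycle_reach_around:
  assumes "is_cycle G T es vs" and n2: "length es \<ge> 2"
  shows "reach G (T - {es ! 0}) (vs ! 1) (vs ! 0)"
proof -
  let ?n = "length es" and ?f = "es ! 0"
  have dist: "distinct es" and sub: "set es \<subseteq> T"
    and J: "\<And>i. i < ?n \<Longrightarrow> joins G (es ! i) (vs ! i) (vs ! (Suc i mod ?n))"
    using assms by (auto simp: is_cycle_def)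
  have ne: "es \<noteq> []" using n2 by auto
  have other: "es ! i \<in> T - {?f}" if "0 < i" "i < ?n" for i
    using that sub ne nth_eq_iff_index_eq[OF dist, of i 0] by auto
  have walk: "reach G (T - {?f}) (vs ! 1) (vs ! i)" if "1 \<le> i" "i < ?n" for i
    using that
  proof (induction i rule: dec_induct)
    case (step i)
    have "Suc i mod ?n = Suc i" using step.prems by simp
    then have "reach G (T - {?f}) (vs ! i) (vs ! Suc i)"
      using other[of i] J[of i] step.hyps step.prems by (intro reach_step[of "es ! i"]) auto
    then show ?case using step by (auto intro: reach_trans)
  qed simp
  have "reach G (T - {?f}) (vs ! 1) (vs ! (?n - 1))" using walk[of "?n - 1"] n2 by simp
  moreover have "reach G (T - {?f}) (vs ! (?n - 1)) (vs ! (Suc (?n - 1) mod ?n))"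
    using other J n2 by (intro reach_step[of "es ! (?n - 1)"]) auto
  moreover have "Suc (?n - 1) = ?n" using n2 by simp
  then have "Suc (?n - 1) mod ?n = 0" by (simp only: mod_self)
  ultimately show ?thesis by (simp add: reach_trans)
qed

lemma is_cycle_not_forest:
  assumes cycle: "is_cycle G T es vs"
  shows "\<not> forest G T"
proof -
  have ne: "es \<noteq> []" and "set es \<subseteq> T"
    and J: "\<And>i. i < length es \<Longrightarrow> joins G (es ! i) (vs ! i) (vs ! (Suc i mod length es))"
    using cycle by (auto simp: is_cycle_def)
  then have fT: "es ! 0 \<in> T" by (simp add: subset_iff)
  show ?thesis
  proof (cases "length es = 1")
    case True
    then have "fst (ends G (es ! 0)) = snd (ends G (es ! 0))" using J[of 0] unfolding joins_def by auto
    then show ?thesis using fT unfolding forest_def by blast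
  next
    case False
    moreover have "length es \<noteq> 0" using ne by simp
    ultimately have n2: "length es \<ge> 2" by linarith
    then have "joins G (es ! 0) (vs ! 0) (vs ! 1)" using J[of 0] ne by simp
    then have "reach G (T - {es ! 0}) (fst (ends G (es ! 0))) (snd (ends G (es ! 0)))"
      by (rule reach_ends) (rule reach_sym[OF is_cycle_reach_around[OF cycle n2]])
    then show ?thesis using fT unfolding forest_def by blast
  qed
qed

lemma is_path_close_cycle:
  assumes p: "is_path G (T - {f}) es vs" "hd vs = b" "last vs = a" and f: "f \<in> T" "ends G f = (a, b)"
  shows "is_cycle G T (es @ [f]) vs"
  unfolding is_cycle_def
proof (intro conjI allI impI)
  have len: "length vs = Suc (length es)" and ne: "vs \<noteq> []" and sub: "set es \<subseteq> T - {f}"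
    using p(1) by (auto simp: is_path_def)
  show "distinct (es @ [f])" using is_path_distinct_edges[OF p(1)] sub by auto
  show "distinct vs" "length vs = length (es @ [f])" using p(1) by (auto simp: is_path_def)
  show "set (es @ [f]) \<subseteq> T" using sub f(1) by auto
  have first: "vs ! 0 = b" using p(2) ne by (simp add: hd_conv_nth)
  have last: "vs ! length es = a" using p(3) ne len by (simp add: last_conv_nth)
  fix i assume i: "i < length (es @ [f])"
  show "joins G ((es @ [f]) ! i) (vs ! i) (vs ! (Suc i mod length (es @ [f])))"
  proof (cases "i < length es")
    case True
    then show ?thesis using p(1) by (simp add: is_path_def nth_append)
  next
    case False
    then have "i = length es" using i by simp
    then show ?thesis using first last f(2) by (simp add: nth_append joins_def)
  qed
qed simp

lemma not_forest_imp_cycle: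
  assumes "\<not> forest G T"
  shows "\<exists>es vs. is_cycle G T es vs"
proof -
  obtain f where fT: "f \<in> T" and nf: "fst (ends G f) = snd (ends G f) \<or>
      reach G (T - {f}) (fst (ends G f)) (snd (ends G f))"
    using assms unfolding forest_def by blast
  obtain a b where ab: "ends G f = (a, b)" by (cases "ends G f")
  show ?thesis
  proof (cases "a = b")
    case True
    then have "is_cycle G T [f] [a]" using fT ab by (simp add: is_cycle_def joins_def)
    then show ?thesis by blast
  next
    case False
    then have "reach G (T - {f}) b a" using nf ab by (auto intro: reach_sym)
    from reach_imp_path[OF this] obtain es vs
      where "is_path G (T - {f}) es vs" "hd vs = b" "last vs = a" by blast
    then have "is_cycle G T (es @ [f]) vs" using fT ab by (rule is_path_close_cycle)
    then show ?thesis by blast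
  qed
qed

lemma spanning_tree_iff_forest:
  "spanning_tree G T \<longleftrightarrow> T \<subseteq> edges G \<and> connected_by G T \<and> forest G T"
  unfolding spanning_tree_def using is_cycle_not_forest not_forest_imp_cycle by blast

lemma finite_spanning_trees:
  assumes "wf_mgraph G"
  shows "finite {T. spanning_tree G T}"
proof (rule finite_subset)
  show "{T. spanning_tree G T} \<subseteq> Pow (edges G)" by (auto simp: spanning_tree_def)
qed (use assms in \<open>simp add: wf_mgraph_def\<close>)

text \<open>A minimal connected spanning edge set has no bypassed edge, so it is a tree.\<close>

lemma ntrees_pos:
  assumes wf: "wf_mgraph G" and conn: "connected_mgraph G"
  shows "ntrees G > 0"
proof -
  let ?C = "{T. T \<subseteq> edges G \<and> connected_by G T}"
  have "finite ?C"
    by (rule finite_subset[of _ "Pow (edges G)"]) (use wf in \<open>auto simp: wf_mgraph_def\<close>)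
  moreover have "?C \<noteq> {}" using conn by (auto simp: connected_mgraph_def)
  ultimately obtain T where "T \<in> ?C" and min_C: "\<forall>T'\<in>?C. T' \<subseteq> T \<longrightarrow> T = T'"
    using finite_has_minimal[of ?C] by blast
  then have T: "T \<subseteq> edges G" "connected_by G T" by auto
  have min: "T' = T" if "T' \<subseteq> T" "connected_by G T'" for T'
    using min_C T(1) that by auto
  have no_bypass: "\<not> reach G (T - {f}) (fst (ends G f)) (snd (ends G f))" if f: "f \<in> T" for f
  proof
    assume bypass: "reach G (T - {f}) (fst (ends G f)) (snd (ends G f))"
    have "connected_by G (T - {f})"
      using T(2) reach_Diff_bypassed_edge[OF bypass] unfolding connected_by_reach by blast
    then show False using min[of "T - {f}"] f by blast
  qed
  have "forest G T"
    unfolding forest_def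
  proof
    fix f assume "f \<in> T"
    then show "fst (ends G f) \<noteq> snd (ends G f) \<and> \<not> reach G (T - {f}) (fst (ends G f)) (snd (ends G f))"
      using no_bypass[of f] by (metis reach_refl)
  qed
  then have "spanning_tree G T" using T by (simp add: spanning_tree_iff_forest)
  then show ?thesis
    unfolding ntrees_def using finite_spanning_trees[OF wf] card_gt_0_iff by blast
qed

section \<open>Deletion and contraction\<close>

definition del_edge :: "('v,'e) mgraph \<Rightarrow> 'e \<Rightarrow> ('v,'e) mgraph" where
  "del_edge G e = (verts G, edges G - {e}, ends G)"

lemma del_edge_simps [simp]:
  "verts (del_edge G e) = verts G" "edges (del_edge G e) = edges G - {e}" "ends (del_edge G e) = ends G"
  by (simp_all add: del_edge_def verts_def edges_def ends_def)

lemma identify_simps [simp]: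
  "verts (identify x y G) = merge x y ` verts G" "edges (identify x y G) = edges G"
  "ends (identify x y G) = (\<lambda>e. map_prod (merge x y) (merge x y) (ends G e))"
  by (simp_all add: identify_def verts_def edges_def ends_def)

lemma merge_target [simp]: "merge x y x = x" and merge_source [simp]: "merge x y y = x"
  by (auto simp: merge_def)

lemma merge_eq_merge_iff: "merge x y u = merge x y w \<longleftrightarrow> u = w \<or> {u, w} = {x, y}"
  by (auto simp: merge_def doubleton_eq_iff)

lemma verts_identify:
  assumes "x \<in> verts G" "x \<noteq> y"
  shows "verts (identify x y G) = verts G - {y}"
  using assms by (auto simp: merge_def image_iff)

lemma wf_del_edge: "wf_mgraph G \<Longrightarrow> wf_mgraph (del_edge G e)"
  unfolding wf_mgraph_def by auto

lemma wf_identify: "wf_mgraph G \<Longrightarrow> wf_mgraph (identify x y G)"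
  unfolding wf_mgraph_def by (auto simp: map_prod_def split_beta)

lemma identify_del_edge: "identify x y (del_edge G e) = del_edge (identify x y G) e"
  by (simp add: del_edge_def identify_def verts_def edges_def ends_def)

lemma spanning_tree_del_edge: "spanning_tree (del_edge G e) T \<longleftrightarrow> spanning_tree G T \<and> e \<notin> T"
proof -
  have "joins (del_edge G e) = joins G" by (simp add: joins_def[abs_def])
  then have "reach (del_edge G e) = reach G" "forest (del_edge G e) = forest G"
    by (simp_all add: reach_def[abs_def] forest_def[abs_def])
  then show ?thesis by (auto simp: spanning_tree_iff_forest connected_by_reach)
qed

lemma ntrees_del_loop:
  assumes "fst (ends G e) = snd (ends G e)"
  shows "ntrees (del_edge G e) = ntrees G"
proof -
  have "e \<notin> T" if "spanning_tree G T" for T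
    using that assms unfolding spanning_tree_iff_forest forest_def by auto
  then show ?thesis unfolding ntrees_def spanning_tree_del_edge by metis
qed

lemma reach_insert_imp_reach_identify:
  assumes "reach G (insert e S) a b" and e: "joins G e x y"
  shows "reach (identify x y G) S (merge x y a) (merge x y b)"
  using assms(1) unfolding reach_def[of G]
proof (induction rule: rtranclp_induct)
  case (step c d)
  from step.hyps(2) obtain g where g: "g \<in> insert e S" "joins G g c d" by blast
  show ?case
  proof (cases "g = e")
    case True
    then have "merge x y c = merge x y d"
      using g(2) e unfolding joins_def by (auto simp: merge_def)
    then show ?thesis using step.IH by simp
  next
    case False
    then have "reach (identify x y G) S (merge x y c) (merge x y d)"
      using g by (intro reach_step[of g]) (auto simp: joins_def)
    then show ?thesis by (rule reach_trans[OF step.IH])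
  qed
qed simp

lemma reach_insert_if_merge_eq:
  assumes "merge x y u = merge x y w" and e: "joins G e x y"
  shows "reach G (insert e S) u w"
  using assms reach_step[of e "insert e S" G x y]
  by (auto simp: merge_eq_merge_iff doubleton_eq_iff intro: reach_sym)

lemma reach_identify_imp_reach_insert:
  assumes "reach (identify x y G) S (merge x y a) c" "merge x y b = c" and e: "joins G e x y"
  shows "reach G (insert e S) a b"
  using assms(1,2) unfolding reach_def[of "identify x y G"]
proof (induction arbitrary: b rule: rtranclp_induct)
  case base
  then show ?case using reach_insert_if_merge_eq[OF _ e] by simp
next
  case (step c d)
  from step.hyps(2) obtain g where g: "g \<in> S" "joins (identify x y G) g c d" by blast
  then obtain u w where uw: "merge x y u = c" "merge x y w = d" "joins G g u w"
    unfolding joins_def by (cases "ends G g") auto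
  have "reach G (insert e S) a u" using step.IH[OF uw(1)] .
  moreover have "reach G (insert e S) u w" using uw(3) g(1) by (intro reach_step[of g]) auto
  moreover have "reach G (insert e S) w b"
    using reach_insert_if_merge_eq[OF _ e] uw(2) step.prems by simp
  ultimately show ?case by (blast intro: reach_trans)
qed

lemma reach_identify_iff:
  assumes "joins G e x y"
  shows "reach (identify x y G) S (merge x y a) (merge x y b) \<longleftrightarrow> reach G (insert e S) a b"
  using reach_insert_imp_reach_identify reach_identify_imp_reach_insert assms by metis

lemma connected_by_identify_iff:
  assumes "joins G e x y"
  shows "connected_by (identify x y G) S \<longleftrightarrow> connected_by G (insert e S)"
  unfolding connected_by_reach using reach_identify_iff[OF assms] by auto

text \<open>If \<open>x\<close> and \<open>y\<close> are already connected by \<open>S\<close>, the new edge \<open>e\<close> closes a cycle with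
  \<open>S\<close>, in which some edge of \<open>S\<close> is bypassed.\<close>

lemma reach_imp_bypassed_edge:
  assumes fin: "finite S" and r: "reach G S x y" and xy: "x \<noteq> y" and e: "joins G e x y"
  shows "\<exists>f\<in>S. reach G (insert e (S - {f})) (fst (ends G f)) (snd (ends G f))"
  using fin r
proof (induction S rule: finite_induct)
  case empty
  then have "x = y" unfolding reach_def by (auto elim: rtranclp.cases)
  then show ?case using xy by simp
next
  case (insert g S)
  show ?case
  proof (cases "reach G S x y")
    case True
    then obtain f where f: "f \<in> S" "reach G (insert e (S - {f})) (fst (ends G f)) (snd (ends G f))"
      using insert.IH by blast
    then have "reach G (insert e (insert g S - {f})) (fst (ends G f)) (snd (ends G f))"
      by (elim reach_mono) blast
    then show ?thesis using f(1) by blast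
  next
    case False
    obtain a b where ab: "ends G g = (a, b)" by (cases "ends G g")
    have sides: "(reach G S x a \<and> reach G S b y) \<or> (reach G S x b \<and> reach G S a y)"
      using reach_insert_cases[OF insert.prems ab] False by blast
    have exy: "reach G (insert e S) x y" using e by (intro reach_step[of e]) auto
    have mono: "reach G (insert e S) u w" if "reach G S u w" for u w
      using that by (rule reach_mono) blast
    have "reach G (insert e S) a b"
      using sides
    proof
      assume "reach G S x a \<and> reach G S b y"
      then show ?thesis using mono exy by (meson reach_sym reach_trans)
    next
      assume "reach G S x b \<and> reach G S a y"
      then show ?thesis using mono exy by (meson reach_sym reach_trans)
    qed
    moreover have "insert g S - {g} = S" using insert.hyps(2) by blast
    ultimately show ?thesis using ab by auto
  qed
qed

context
  fixes G :: "('v,'e) mgraph" and e x y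
  assumes wf: "wf_mgraph G" and e: "e \<in> edges G" "ends G e = (x, y)" and xy: "x \<noteq> y"
begin

private lemma joins_e: "joins G e x y"
  using e by (simp add: joins_def)

private lemma forest_insert_iff:
  assumes "e \<notin> T"
  shows "forest G (insert e T) \<longleftrightarrow> \<not> reach G T x y \<and> forest (identify x y G) T"
proof -
  let ?H = "identify x y G"
  have edge: "(fst (ends G f) \<noteq> snd (ends G f) \<and>
        \<not> reach G (insert e (T - {f})) (fst (ends G f)) (snd (ends G f)))
      \<longleftrightarrow> (fst (ends ?H f) \<noteq> snd (ends ?H f) \<and> \<not> reach ?H (T - {f}) (fst (ends ?H f)) (snd (ends ?H f)))"
    for f
  proof -
    obtain a b where ab: "ends G f = (a, b)" by (cases "ends G f")
    have "merge x y a = merge x y b \<Longrightarrow> a \<noteq> b \<Longrightarrow> reach G (insert e (T - {f})) a b"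
      using reach_identify_iff[OF joins_e, of "T - {f}" a b] by simp
    then show ?thesis using ab reach_identify_iff[OF joins_e, of "T - {f}" a b] by auto
  qed
  have "insert e T - {f} = insert e (T - {f})" if "f \<in> T" for f using that assms by blast
  moreover have "insert e T - {e} = T" using assms by blast
  ultimately have "forest G (insert e T) \<longleftrightarrow> \<not> reach G T x y \<and>
      (\<forall>f\<in>T. fst (ends G f) \<noteq> snd (ends G f) \<and>
        \<not> reach G (insert e (T - {f})) (fst (ends G f)) (snd (ends G f)))"
    using e(2) xy unfolding forest_def by auto
  also have "\<dots> \<longleftrightarrow> \<not> reach G T x y \<and> forest ?H T"
    unfolding forest_def[of ?H] using edge by blast
  finally show ?thesis .
qed

lemma spanning_tree_insert_iff:
  assumes eT: "e \<notin> T"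
  shows "spanning_tree G (insert e T) \<longleftrightarrow> spanning_tree (identify x y G) T"
proof
  assume "spanning_tree G (insert e T)"
  then show "spanning_tree (identify x y G) T"
    using forest_insert_iff[OF eT] connected_by_identify_iff[OF joins_e, of T]
    by (auto simp: spanning_tree_iff_forest)
next
  assume st: "spanning_tree (identify x y G) T"
  then have TE: "T \<subseteq> edges G" and forest: "forest (identify x y G) T"
    by (auto simp: spanning_tree_iff_forest)
  have "\<not> reach G T x y"
  proof
    assume "reach G T x y"
    moreover have "finite T" using TE wf finite_subset unfolding wf_mgraph_def by blast
    ultimately obtain f where f: "f \<in> T"
      and "reach G (insert e (T - {f})) (fst (ends G f)) (snd (ends G f))"
      using reach_imp_bypassed_edge[OF _ _ xy joins_e] by blast
    then have "reach (identify x y G) (T - {f}) (fst (ends (identify x y G) f)) (snd (ends (identify x y G) f))"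
      using reach_identify_iff[OF joins_e, of "T - {f}" "fst (ends G f)" "snd (ends G f)"]
      by (simp add: map_prod_def split_beta)
    then show False using forest f unfolding forest_def by blast
  qed
  then show "spanning_tree G (insert e T)"
    using forest_insert_iff[OF eT] st connected_by_identify_iff[OF joins_e, of T] TE e(1)
    by (auto simp: spanning_tree_iff_forest)
qed

private lemma spanning_tree_identify_not_e: "spanning_tree (identify x y G) T \<Longrightarrow> e \<notin> T"
  using e(2) unfolding spanning_tree_iff_forest forest_def by auto

private lemma ntrees_del_edge_plus_identify: "ntrees G = ntrees (del_edge G e) + ntrees (identify x y G)"
proof -
  let ?A = "{T. spanning_tree G T \<and> e \<notin> T}" and ?B = "{T. spanning_tree G T \<and> e \<in> T}"
  let ?H = "identify x y G"
  have fin: "finite ?A" "finite ?B" using finite_spanning_trees[OF wf] by (auto intro: finite_subset)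
  have A: "?A = {T. spanning_tree (del_edge G e) T}" by (auto simp: spanning_tree_del_edge)
  have B: "?B = insert e ` {T. spanning_tree ?H T}"
  proof
    show "?B \<subseteq> insert e ` {T. spanning_tree ?H T}"
    proof
      fix T assume T: "T \<in> ?B"
      then have "spanning_tree ?H (T - {e})"
        using spanning_tree_insert_iff[of "T - {e}"] by (simp add: insert_absorb)
      moreover have "T = insert e (T - {e})" using T by blast
      ultimately show "T \<in> insert e ` {T. spanning_tree ?H T}" by blast
    qed
    show "insert e ` {T. spanning_tree ?H T} \<subseteq> ?B"
      using spanning_tree_insert_iff spanning_tree_identify_not_e by blast
  qed
  have inj: "inj_on (insert e) {T. spanning_tree ?H T}"
    using spanning_tree_identify_not_e unfolding inj_on_def by (metis Diff_insert_absorb mem_Collect_eq)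
  have "ntrees G = card (?A \<union> ?B)" unfolding ntrees_def by (rule arg_cong[where f = card]) blast
  also have "\<dots> = card ?A + card ?B" by (rule card_Un_disjoint[OF fin]) blast
  also have "card ?B = ntrees ?H" unfolding B ntrees_def by (rule card_image[OF inj])
  also have "card ?A = ntrees (del_edge G e)" unfolding A ntrees_def ..
  finally show ?thesis .
qed

lemma ntrees_deletion_contraction:
  "ntrees G = ntrees (del_edge G e) + ntrees (identify x y (del_edge G e))"
  using ntrees_del_edge_plus_identify ntrees_del_loop[of "identify x y G" e] e(2)
  by (simp add: identify_del_edge)

end

lemma ntrees_singleton:
  assumes wf: "wf_mgraph G" and V: "verts G = {r}"
  shows "ntrees G = 1"
proof -
  have "spanning_tree G T \<longleftrightarrow> T = {}" for T
  proof
    assume T: "spanning_tree G T"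
    show "T = {}"
    proof (rule ccontr)
      assume "T \<noteq> {}"
      then obtain f where f: "f \<in> T" by blast
      then have "fst (ends G f) = r" "snd (ends G f) = r"
        using T wf V unfolding wf_mgraph_def spanning_tree_def by auto
      moreover have "forest G T" using T by (simp add: spanning_tree_iff_forest)
      ultimately show False using f unfolding forest_def by auto
    qed
  next
    assume "T = {}"
    then show "spanning_tree G T" using V by (auto simp: spanning_tree_iff_forest forest_def connected_by_reach)
  qed
  then have "{T. spanning_tree G T} = {{}}" by blast
  then show ?thesis unfolding ntrees_def by simp
qed

lemma ntrees_isolated:
  assumes r: "r \<in> verts G" and w: "w \<in> verts G" "w \<noteq> r"
    and iso: "\<And>f v. f \<in> edges G \<Longrightarrow> joins G f r v \<Longrightarrow> v = r"
  shows "ntrees G = 0"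
proof -
  have "\<not> spanning_tree G T" for T
  proof
    assume "spanning_tree G T"
    then have "T \<subseteq> edges G" and "reach G T r w"
      using r w unfolding spanning_tree_iff_forest connected_by_reach by auto
    from this(2) have "w = r" unfolding reach_def
    proof (induction rule: rtranclp_induct)
      case (step c d)
      then show ?case using iso \<open>T \<subseteq> edges G\<close> by blast
    qed simp
    then show False using w by simp
  qed
  then have "{T. spanning_tree G T} = {}" by blast
  then show ?thesis by (simp only: ntrees_def card.empty)
qed

section \<open>The matrix-tree theorem\<close>

text \<open>The Laplacian is \<open>B B\<^sup>T\<close> for the signed incidence matrix \<open>B\<close>; a loop has incidence
  vector zero and does not contribute.\<close>

definition incidence :: "('v,'e) mgraph \<Rightarrow> 'e \<Rightarrow> 'v \<Rightarrow> 'a::comm_ring_1" where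
  "incidence G e i = (if fst (ends G e) = i then 1 else 0) - (if snd (ends G e) = i then 1 else 0)"

definition laplacian :: "('v,'e) mgraph \<Rightarrow> 'v \<Rightarrow> 'v \<Rightarrow> 'a::comm_ring_1" where
  "laplacian G i j = (\<Sum>e\<in>edges G. incidence G e i * incidence G e j)"

lemma laplacian_sym: "laplacian G i j = laplacian G j i"
  unfolding laplacian_def by (simp add: mult.commute)

lemma incidence_identify:
  assumes "i \<noteq> y"
  shows "incidence (identify x y G) e i = incidence G e i + (if i = x then incidence G e y else 0)"
  using assms by (cases "ends G e") (auto simp: incidence_def merge_def)

lemma laplacian_identify:
  assumes "i \<noteq> y" "j \<noteq> y"
  shows "laplacian (identify x y G) i j = merge_rowcol x y (laplacian G) i j"
  unfolding laplacian_def merge_rowcol_def using assms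
  by (cases "i = x"; cases "j = x") (simp_all add: incidence_identify sum.distrib algebra_simps sum_distrib_left)

lemma laplacian_identify_off:
  assumes "i \<notin> {x, y}" "j \<notin> {x, y}"
  shows "laplacian (identify x y G) i j = laplacian G i j"
  using assms by (simp add: laplacian_identify merge_rowcol_def)

lemma laplacian_del_edge:
  assumes "e \<in> edges G" "finite (edges G)"
  shows "laplacian G i j = (laplacian (del_edge G e) i j + incidence G e i * incidence G e j :: 'a::comm_ring_1)"
  unfolding laplacian_def incidence_def using assms by (simp add: sum.remove)

lemma laplacian_row_sum:
  assumes "wf_mgraph G"
  shows "(\<Sum>j\<in>verts G. laplacian G i j) = (0 :: 'a::comm_ring_1)"
proof -
  have "(\<Sum>j\<in>verts G. laplacian G i j) = (\<Sum>e\<in>edges G. incidence G e i * (\<Sum>j\<in>verts G. incidence G e j))"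
    unfolding laplacian_def sum_distrib_left by (rule sum.swap)
  also have "\<dots> = 0"
    using assms unfolding wf_mgraph_def incidence_def by (simp add: sum_subtractf)
  finally show ?thesis .
qed

text \<open>On \<open>V - {r}\<close>, deleting the edge \<open>rv\<close> only lowers the diagonal entry at \<open>v\<close> by one.\<close>

lemma det_laplacian_del_edge:
  assumes wf: "wf_mgraph G" and r: "r \<in> verts G"
    and e: "e \<in> edges G" "joins G e r v" and vr: "v \<noteq> r"
  shows "det_on (verts G - {r}) (laplacian G :: 'v \<Rightarrow> 'v \<Rightarrow> 'a::comm_ring_1)
       = det_on (verts G - {r}) (laplacian (del_edge G e))
         + det_on (verts G - {r, v}) (laplacian (del_edge G e))"
proof -
  let ?W = "verts G - {r}" and ?L' = "laplacian (del_edge G e) :: 'v \<Rightarrow> 'v \<Rightarrow> 'a"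
  have fin: "finite (verts G)" "finite (edges G)" using wf by (auto simp: wf_mgraph_def)
  have "v \<in> verts G" using wf e unfolding wf_mgraph_def joins_def by force
  then have vW: "v \<in> ?W" using vr by simp
  have inc: "incidence G e i * incidence G e j = (if i = v \<and> j = v then 1 else 0 :: 'a)"
    if "i \<in> ?W" "j \<in> ?W" for i j
    using that e(2) vr unfolding joins_def by (elim disjE) (auto simp: incidence_def)
  have "det_on ?W (laplacian G) = det_on ?W (?L'(v := (\<lambda>j. 1 * ?L' v j + 1 * unit_vec v j)))"
  proof (rule det_on_cong)
    fix i j assume ij: "i \<in> ?W" "j \<in> ?W"
    show "laplacian G i j = (?L'(v := (\<lambda>j. 1 * ?L' v j + 1 * unit_vec v j))) i j"
      using inc[OF ij] laplacian_del_edge[OF e(1) fin(2), of i j, where 'a = 'a] by (auto simp: unit_vec_def)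
  qed
  also have "\<dots> = det_on ?W (?L'(v := ?L' v)) + det_on ?W (?L'(v := unit_vec v))"
    using det_on_row_lincomb[of ?W v ?L' 1 "?L' v" 1 "unit_vec v"] fin vW by simp
  also have "det_on ?W (?L'(v := unit_vec v)) = det_on (?W - {v}) (?L'(v := unit_vec v))"
    by (rule det_on_unit_row) (use fin vW in auto)
  also have "\<dots> = det_on (verts G - {r, v}) ?L'"
    unfolding Diff_insert2[symmetric] by (rule det_on_cong) auto
  finally show ?thesis by simp
qed

lemma det_laplacian_identify:
  assumes x: "x \<in> verts G" and xy: "x \<noteq> y" "{x, y} = {r, v}"
  shows "det_on (verts (identify x y G) - {x}) (laplacian (identify x y G))
       = (det_on (verts G - {r, v}) (laplacian G) :: 'a::comm_ring_1)"
proof -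
  have "verts (identify x y G) - {x} = verts G - {r, v}"
    using verts_identify[OF x xy(1)] xy(2) by auto
  moreover have "laplacian (identify x y G) i j = laplacian G i j"
    if "i \<in> verts G - {r, v}" "j \<in> verts G - {r, v}" for i j
    using that xy(2) by (intro laplacian_identify_off) auto
  ultimately show ?thesis by (metis det_on_cong)
qed

lemma det_laplacian_isolated:
  assumes wf: "wf_mgraph G" and r: "r \<in> verts G" and w: "w \<in> verts G" "w \<noteq> r"
    and iso: "\<And>f v. f \<in> edges G \<Longrightarrow> joins G f r v \<Longrightarrow> v = r"
  shows "det_on (verts G - {r}) (laplacian G :: 'v \<Rightarrow> 'v \<Rightarrow> 'a::comm_ring_1) = 0"
proof (rule det_on_zero_row_sums)
  have fin: "finite (verts G)" using wf unfolding wf_mgraph_def by simp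
  then show "finite (verts G - {r})" by simp
  show "verts G - {r} \<noteq> {}" using w by blast
  fix i
  have "incidence G f r = (0 :: 'a)" if f: "f \<in> edges G" for f
  proof -
    obtain a b where ab: "ends G f = (a, b)" by (cases "ends G f")
    have "a = r \<Longrightarrow> b = r" using iso[OF f, of b] ab by (simp add: joins_def)
    moreover have "b = r \<Longrightarrow> a = r" using iso[OF f, of a] ab by (simp add: joins_def)
    ultimately show ?thesis using ab by (auto simp: incidence_def)
  qed
  then have "laplacian G i r = (0 :: 'a)" unfolding laplacian_def by (simp add: sum.neutral)
  moreover have "(\<Sum>j\<in>verts G. laplacian G i j) = laplacian G i r + (\<Sum>j\<in>verts G - {r}. laplacian G i j :: 'a)"
    by (rule sum.remove[OF fin r])
  ultimately show "(\<Sum>j\<in>verts G - {r}. laplacian G i j) = (0 :: 'a)"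
    using laplacian_row_sum[OF wf, of i, where 'a = 'a] by simp
qed

lemma matrix_tree_isolated_root:
  assumes wf: "wf_mgraph G" and r: "r \<in> verts G"
    and iso: "\<And>f v. f \<in> edges G \<Longrightarrow> joins G f r v \<Longrightarrow> v = r"
  shows "of_nat (ntrees G) = (det_on (verts G - {r}) (laplacian G) :: 'a::comm_ring_1)"
proof (cases "verts G = {r}")
  case True
  then show ?thesis using ntrees_singleton[OF wf True] by simp
next
  case False
  then obtain w where w: "w \<in> verts G" "w \<noteq> r" using r by blast
  then show ?thesis using ntrees_isolated[OF r w iso] det_laplacian_isolated[OF wf r w iso] by simp
qed

theorem matrix_tree:
  fixes G :: "('v,'e) mgraph"
  assumes "wf_mgraph G" "r \<in> verts G"
  shows "of_nat (ntrees G) = (det_on (verts G - {r}) (laplacian G) :: 'a::comm_ring_1)"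
  using assms
proof (induction "card (edges G)" arbitrary: G r rule: less_induct)
  case less
  note wf = less.prems(1) and r = less.prems(2)
  have finE: "finite (edges G)" using wf unfolding wf_mgraph_def by simp
  show ?case
  proof (cases "\<exists>e\<in>edges G. \<exists>v. v \<noteq> r \<and> joins G e r v")
    case True
    then obtain e v where e: "e \<in> edges G" "joins G e r v" and vr: "v \<noteq> r" by blast
    obtain x y where exy: "ends G e = (x, y)" by (cases "ends G e")
    have xy: "x \<noteq> y" "{x, y} = {r, v}" using e(2) exy vr unfolding joins_def by auto
    have x: "x \<in> verts G" using wf e(1) exy unfolding wf_mgraph_def by force
    let ?G' = "del_edge G e"
    let ?H = "identify x y ?G'"
    have smaller: "card (edges ?G') < card (edges G)" "card (edges ?H) < card (edges G)"
      using card_Diff1_less[OF finE e(1)] by simp_all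
    have "of_nat (ntrees G) = (of_nat (ntrees ?G') + of_nat (ntrees ?H) :: 'a)"
      using ntrees_deletion_contraction[OF wf e(1) exy xy(1)] by simp
    also have "of_nat (ntrees ?G') = det_on (verts G - {r}) (laplacian ?G' :: 'v \<Rightarrow> 'v \<Rightarrow> 'a)"
      using less.hyps[OF smaller(1), of r] wf_del_edge[OF wf] r by simp
    also have "of_nat (ntrees ?H) = det_on (verts ?H - {x}) (laplacian ?H :: 'v \<Rightarrow> 'v \<Rightarrow> 'a)"
      using less.hyps[OF smaller(2), of x] wf_identify[OF wf_del_edge[OF wf]] verts_identify[of x ?G' y] x xy
      by simp
    also have "\<dots> = det_on (verts G - {r, v}) (laplacian ?G')"
      using det_laplacian_identify[of x ?G' y r v] x xy by simp
    also have "det_on (verts G - {r}) (laplacian ?G') + \<dots> = det_on (verts G - {r}) (laplacian G)"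
      by (rule det_laplacian_del_edge[OF wf r e vr, symmetric])
    finally show ?thesis .
  next
    case False
    then show ?thesis using matrix_tree_isolated_root[OF wf r] by blast
  qed
qed

text \<open>Contracting \<open>a\<close> and \<open>b\<close> and rooting at the merged vertex deletes both rows and columns.\<close>

lemma ntrees_identify_eq_det:
  assumes wf: "wf_mgraph H" and a: "a \<in> verts H" and ab: "a \<noteq> b"
  shows "of_nat (ntrees (identify a b H)) = (det_on (verts H - {a, b}) (laplacian H) :: 'a::comm_ring_1)"
proof -
  have "a \<in> verts (identify a b H)" using verts_identify[OF a ab] ab a by simp
  then have "of_nat (ntrees (identify a b H))
      = (det_on (verts (identify a b H) - {a}) (laplacian (identify a b H)) :: 'a)"
    by (rule matrix_tree[OF wf_identify[OF wf]])
  also have "\<dots> = det_on (verts H - {a, b}) (laplacian H)"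
    by (rule det_laplacian_identify[OF a ab refl])
  finally show ?thesis .
qed

lemma ntrees_identify_eq_det_merge_rowcol:
  assumes wf: "wf_mgraph H" and x: "x \<in> verts H" "x \<noteq> y" and r: "r \<in> verts H" "r \<noteq> y"
  shows "of_nat (ntrees (identify x y H))
       = (det_on (verts H - {r, y}) (merge_rowcol x y (laplacian H)) :: 'a::comm_ring_1)"
proof -
  have V: "verts (identify x y H) = verts H - {y}" by (rule verts_identify[OF x])
  then have "of_nat (ntrees (identify x y H))
      = (det_on (verts H - {y} - {r}) (laplacian (identify x y H)) :: 'a)"
    using matrix_tree[OF wf_identify[OF wf], of r x y] r by simp
  also have "\<dots> = det_on (verts H - {r, y}) (merge_rowcol x y (laplacian H))"
    by (subst insert_commute, subst Diff_insert2[symmetric])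
      (rule det_on_cong, simp add: laplacian_identify)
  finally show ?thesis .
qed

section \<open>The adjugate of the reduced Laplacian\<close>

locale rooted_graph =
  fixes G :: "('v,'e) mgraph" and p :: 'v
  assumes wf: "wf_mgraph G" and connected: "connected_mgraph G" and root: "p \<in> verts G"
begin

abbreviation W :: "'v set" where "W \<equiv> verts G - {p}"

abbreviation L :: "'v \<Rightarrow> 'v \<Rightarrow> real" where "L \<equiv> laplacian G"

text \<open>Divided by \<open>t(G)\<close>, \<open>K\<close> is the inverse of the reduced Laplacian \<open>L[W]\<close>, extended by zero
  at the root.\<close>

definition K :: "'v \<Rightarrow> 'v \<Rightarrow> real" where
  "K x y = (if x = p \<or> y = p then 0 else adj_on W L x y)"

lemma finite_W: "finite W"
  using wf unfolding wf_mgraph_def by simp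

lemma ntrees_eq_det: "real (ntrees G) = det_on W L"
  by (rule matrix_tree[OF wf root])

lemma det_nonzero: "det_on W L \<noteq> 0"
  using ntrees_eq_det ntrees_pos[OF wf connected] by simp

lemma K_root [simp]: "K p y = 0" "K x p = 0"
  unfolding K_def by auto

lemma adj_sym: "x \<in> W \<Longrightarrow> y \<in> W \<Longrightarrow> adj_on W L x y = adj_on W L y x"
  by (rule adj_on_sym[OF finite_W _ _ laplacian_sym])

lemma K_sym: "x \<in> verts G \<Longrightarrow> y \<in> verts G \<Longrightarrow> K x y = K y x"
  unfolding K_def using adj_sym by auto

lemma K_diag: "x \<in> W \<Longrightarrow> K x x = det_on (W - {x}) L"
  unfolding K_def using adj_on_diag[OF finite_W] by simp

lemma jacobi_K:
  assumes ab: "a \<in> W" "b \<in> W" "a \<noteq> b"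
  shows "det_on W L * det_on (W - {a, b}) L = K a a * K b b - (K a b)\<^sup>2"
  using jacobi_adj_on[OF finite_W ab det_nonzero] adj_sym[OF ab(1,2)] ab
  unfolding K_def by (simp add: power2_eq_square)

text \<open>\<open>t(G\<^sub>x\<^sub>y) / t(G)\<close> is the effective resistance between \<open>x\<close> and \<open>y\<close>.\<close>

lemma ntrees_id_eq_K:
  assumes x: "x \<in> verts G" and y: "y \<in> verts G"
  shows "real (ntrees_id G x y) = K x x + K y y - 2 * K x y"
proof (cases "x = y")
  case xy: False
  then have nid: "ntrees_id G x y = ntrees (identify x y G)" by (simp add: ntrees_id_def)
  show ?thesis
  proof (cases "p \<in> {x, y}")
    case True
    then obtain z where z: "z \<in> W" "{x, y} = {p, z}" using x y xy by blast
    have "real (ntrees_id G x y) = det_on (verts G - {x, y}) L"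
      unfolding nid by (rule ntrees_identify_eq_det[OF wf x xy])
    also have "verts G - {x, y} = W - {z}" using z by auto
    also have "det_on (W - {z}) L = K z z" using z by (simp add: K_diag)
    finally show ?thesis using z by (auto simp: doubleton_eq_iff)
  next
    case False
    then have xW: "x \<in> W" and yW: "y \<in> W" using x y by auto
    have "verts G - {p, y} = W - {y}" by auto
    then have "real (ntrees_id G x y) = det_on (W - {y}) (merge_rowcol x y L)"
      unfolding nid using ntrees_identify_eq_det_merge_rowcol[OF wf x xy root] False by simp
    also have "\<dots> = adj_on W L x x + adj_on W L y y - adj_on W L x y - adj_on W L y x"
      by (rule det_on_Diff_merge_rowcol[OF finite_W xW yW xy])
    finally show ?thesis
      using False adj_sym[OF xW yW] unfolding K_def by auto
  qed
qed (simp add: ntrees_id_def)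

lemma ntrees_id_commute:
  assumes "x \<in> verts G" "y \<in> verts G"
  shows "ntrees_id G x y = ntrees_id G y x"
proof -
  have "real (ntrees_id G x y) = real (ntrees_id G y x)"
    using ntrees_id_eq_K[OF assms] ntrees_id_eq_K[OF assms(2,1)] K_sym[OF assms] by simp
  then show ?thesis by simp
qed

text \<open>Rooted at \<open>p\<close>, the reduced Laplacian of \<open>G\<^sub>p\<^sub>q\<^sub>,\<^sub>s\<^sub>t\<close> is the merged matrix on \<open>W - {q, t}\<close>.
  Jacobi's identity turns its determinant into a \<open>2 \<times> 2\<close> minor of the adjugate of the merged
  matrix on \<open>W\<close>, whose entries are combinations of those of \<open>L[W]\<close>.\<close>

lemma ntrees_identify2_eq_K:
  assumes q: "q \<in> W" and s: "s \<in> W" "s \<noteq> q" and t: "t \<in> W" "t \<noteq> q" and st: "s \<noteq> t"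
  shows "det_on W L * real (ntrees (identify s t (identify p q G)))
       = K q q * (K s s + K t t - 2 * K s t) - (K q s - K q t)\<^sup>2"
proof -
  let ?H = "identify p q G" and ?B = "merge_rowcol s t L"
  have VH: "verts ?H = verts G - {q}" by (rule verts_identify[OF root]) (use q in auto)
  have "real (ntrees (identify s t ?H)) = det_on (verts ?H - {p, t}) (merge_rowcol s t (laplacian ?H))"
    by (rule ntrees_identify_eq_det_merge_rowcol[OF wf_identify[OF wf]]) (use VH s t q st root in auto)
  also have "verts ?H - {p, t} = W - {q, t}" using VH by auto
  also have "det_on (W - {q, t}) (merge_rowcol s t (laplacian ?H)) = det_on (W - {q, t}) ?B"
    by (rule det_on_cong) (use s t in \<open>simp add: merge_rowcol_def laplacian_identify_off\<close>)
  finally have contract: "real (ntrees (identify s t ?H)) = det_on (W - {q, t}) ?B" .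
  have det_B: "det_on W ?B = det_on W L" by (rule det_on_merge_rowcol[OF finite_W s(1) t(1) st])
  have "adj_on W ?B q q * adj_on W ?B t t - adj_on W ?B q t * adj_on W ?B t q
      = det_on W ?B * det_on (W - {q, t}) ?B"
    by (rule jacobi_adj_on[OF finite_W q t(1) t(2)[symmetric]]) (use det_B det_nonzero in simp)
  moreover have "adj_on W ?B q t = adj_on W ?B t q"
    by (rule adj_on_sym[OF finite_W q t(1)]) (rule merge_rowcol_sym[OF laplacian_sym])
  moreover have "adj_on W ?B t t = adj_on W L s s + adj_on W L t t - adj_on W L s t - adj_on W L t s"
    using adj_on_diag[OF finite_W t(1), of ?B] det_on_Diff_merge_rowcol[OF finite_W s(1) t(1) st] by simp
  moreover note adj_on_merge_rowcol[OF finite_W s(1) t(1) st q s(2)[symmetric] t(2)[symmetric], of L]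
  ultimately show ?thesis
    using contract det_B adj_sym[OF s(1) t(1)] adj_sym[OF q s(1)] adj_sym[OF q t(1)] s t q
    unfolding K_def by (simp add: power2_eq_square algebra_simps)
qed

lemma ntrees_id2_triple_eq_K:
  assumes q: "q \<in> W" and x: "x \<in> W" "x \<noteq> q" and m: "{merge p q s, merge p q t} = {p, x}"
  shows "real (ntrees G) * real (ntrees_id2 G p q s t) = K q q * K x x - (K q x)\<^sup>2"
proof -
  let ?H = "identify p q G" and ?a = "merge p q s" and ?b = "merge p q t"
  have ab: "?a \<noteq> ?b" using m x by (auto simp: doubleton_eq_iff)
  have VH: "verts ?H = verts G - {q}" by (rule verts_identify[OF root]) (use q in auto)
  have "p \<noteq> q" using q by auto
  then have "ntrees_id2 G p q s t = ntrees (identify ?a ?b ?H)"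
    using ab by (simp add: ntrees_id2_def ntrees_id_def)
  also have "real \<dots> = det_on (verts ?H - {?a, ?b}) (laplacian ?H)"
    by (rule ntrees_identify_eq_det[OF wf_identify[OF wf]]) (use VH m x q root ab in \<open>auto simp: doubleton_eq_iff\<close>)
  also have "verts ?H - {?a, ?b} = W - {q, x}" using VH m by auto
  also have "det_on (W - {q, x}) (laplacian ?H) = det_on (W - {q, x}) L"
    by (rule det_on_cong) (simp add: laplacian_identify_off)
  finally show ?thesis using jacobi_K[OF q x(1) x(2)[symmetric]] ntrees_eq_det by simp
qed

lemma ntrees_id2_eq_K:
  assumes q: "q \<in> verts G" and s: "s \<in> verts G" and t: "t \<in> verts G"
  shows "real (ntrees G) * real (ntrees_id2 G p q s t)
       = K q q * (K s s + K t t - 2 * K s t) - (K q s - K q t)\<^sup>2"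
proof (cases "p = q")
  case pq: False
  let ?m = "merge p q"
  have qW: "q \<in> W" using q pq by simp
  have id2: "ntrees_id2 G p q s t = ntrees_id (identify p q G) (?m s) (?m t)"
    using pq by (simp add: ntrees_id2_def)
  consider (same) "?m s = ?m t" | (generic) "s \<notin> {p, q}" "t \<notin> {p, q}" "s \<noteq> t"
    | (first) "s \<in> {p, q}" "t \<notin> {p, q}" | (second) "s \<notin> {p, q}" "t \<in> {p, q}"
    by (cases "?m s = ?m t"; cases "s \<in> {p, q}"; cases "t \<in> {p, q}") (auto simp: merge_def)
  then show ?thesis
  proof cases
    case same
    then have "ntrees_id2 G p q s t = 0" using id2 by (simp add: ntrees_id_def)
    moreover have "s = t \<or> {s, t} = {p, q}" using same by (simp add: merge_eq_merge_iff)
    ultimately show ?thesis using K_sym[OF q] by (auto simp: doubleton_eq_iff power2_eq_square)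
  next
    case generic
    then have "ntrees_id2 G p q s t = ntrees (identify s t (identify p q G))"
      using id2 by (simp add: merge_def ntrees_id_def)
    then show ?thesis
      using ntrees_identify2_eq_K[OF qW] generic s t ntrees_eq_det by simp
  next
    case first
    then have "{?m s, ?m t} = {p, t}" by (auto simp: merge_def)
    from ntrees_id2_triple_eq_K[OF qW _ _ this] show ?thesis
      using first t K_sym[OF q t] by (auto simp: power2_eq_square algebra_simps)
  next
    case second
    then have "{?m s, ?m t} = {p, s}" by (auto simp: merge_def)
    from ntrees_id2_triple_eq_K[OF qW _ _ this] show ?thesis
      using second s K_sym[OF q s] by (auto simp: power2_eq_square algebra_simps)
  qed
next
  case True
  then have "q = p" by simp
  then show ?thesis by (simp add: ntrees_id2_def)
qed

end

theorem theorem5p1: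
  fixes G :: "('v,'e) mgraph"
  assumes "wf_mgraph G" and "connected_mgraph G"
  shows "(\<forall>s\<in>verts G. \<forall>t\<in>verts G. \<forall>p\<in>verts G. \<forall>q\<in>verts G.
           real (ntrees G) * real (ntrees_id2 G p q s t) =
             real (ntrees_id G s t) * real (ntrees_id G p q)
             - 1/4 * (real (ntrees_id G p s) - real (ntrees_id G q s)
                      - real (ntrees_id G p t) + real (ntrees_id G q t))^2)
     \<and> (\<forall>s\<in>verts G. \<forall>p\<in>verts G. \<forall>q\<in>verts G.
           real (ntrees G) * real (ntrees_id2 G p q p s) =
             real (ntrees_id G p s) * real (ntrees_id G p q)
             - 1/4 * (real (ntrees_id G p s) - real (ntrees_id G q s)
                      + real (ntrees_id G p q))^2)"
proof -
  have general: "real (ntrees G) * real (ntrees_id2 G p q s t) =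
      real (ntrees_id G s t) * real (ntrees_id G p q)
      - 1/4 * (real (ntrees_id G p s) - real (ntrees_id G q s)
               - real (ntrees_id G p t) + real (ntrees_id G q t))^2"
    if s: "s \<in> verts G" and t: "t \<in> verts G" and p: "p \<in> verts G" and q: "q \<in> verts G" for s t p q
  proof -
    interpret rooted_graph G p using assms p by unfold_locales
    show ?thesis
      unfolding ntrees_id2_eq_K[OF q s t] ntrees_id_eq_K[OF s t] ntrees_id_eq_K[OF p q]
        ntrees_id_eq_K[OF p s] ntrees_id_eq_K[OF q s] ntrees_id_eq_K[OF p t] ntrees_id_eq_K[OF q t]
      by (simp add: power2_eq_square algebra_simps)
  qed
  have "real (ntrees G) * real (ntrees_id2 G p q p s) =
      real (ntrees_id G p s) * real (ntrees_id G p q)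
      - 1/4 * (real (ntrees_id G p s) - real (ntrees_id G q s) + real (ntrees_id G p q))^2"
    if s: "s \<in> verts G" and p: "p \<in> verts G" and q: "q \<in> verts G" for s p q
  proof -
    interpret rooted_graph G p using assms p by unfold_locales
    have "ntrees_id G p p = 0" by (simp add: ntrees_id_def)
    then show ?thesis
      using general[OF p s p q] ntrees_id_commute[OF q p] by (simp add: power2_eq_square algebra_simps)
  qed
  with general show ?thesis by blast
qed

end
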